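(* Consider the memoryless two-user channel $$Y_1=X_1\exp\!\big(i h_{11}|X_1|^2+i h_{12}|X_2|^2\big)+Z_1,\qquad Y_2=X_2\exp\!\big(i h_{21}|X_1|^2+i h_{22}|X_2|^2\big)+Z_2,$$ with real coefficients $h_{11},h_{22}$ and nonzero real $h_{12},h_{21}$, where $Z_1,Z_2$ are independent circularly-symmetric complex Gaussian with variance $N$, independent of the inputs. Then there exist independent input distributions for $X_1,X_2$ with $\mathbb{E}|X_k|^2\le P^{(k)}$, $|X_1|^2\in\{2\pi m/|h_{21}|:m=1,2,\dots\}$ and $|X_2|^2\in\{2\pi m/|h_{12}|:m=1,2,\dots\}$ almost surely (so that $h_{21}|X_1|^2$ and $h_{12}|X_2|^2$ are integer multiples of $2\pi$, "interference focusing"), such that for $k=1,2$ the achievable rates $R_k=I(X_k;Y_k)$ satisfy $$\liminf_{P^{(1)}/N,\,P^{(2)}/N\to\infty}\frac{R_k}{\log(P^{(k)}/N)}\ge 1,$$ i.e. the pre-log pair $(1,1)$ is achieved. *)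

theory Defs
  imports "HOL-Probability.Probability"
begin

definition cgauss :: "real \<Rightarrow> complex measure" where
  "cgauss N = density lborel (\<lambda>z. ennreal (exp (- ((cmod z)\<^sup>2 / N)) / (pi * N)))"

definition out1 :: "real \<Rightarrow> real \<Rightarrow> complex \<Rightarrow> complex \<Rightarrow> complex \<Rightarrow> complex" where
  "out1 h11 h12 x1 x2 z1 = x1 * cis (h11 * (cmod x1)\<^sup>2 + h12 * (cmod x2)\<^sup>2) + z1"

definition out2 :: "real \<Rightarrow> real \<Rightarrow> complex \<Rightarrow> complex \<Rightarrow> complex \<Rightarrow> complex" where
  "out2 h21 h22 x1 x2 z2 = x2 * cis (h21 * (cmod x1)\<^sup>2 + h22 * (cmod x2)\<^sup>2) + z2"

definition joint :: "complex measure \<Rightarrow> complex measure \<Rightarrow> real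
    \<Rightarrow> (complex \<times> complex \<times> complex \<times> complex) measure" where
  "joint \<mu>1 \<mu>2 N = \<mu>1 \<Otimes>\<^sub>M (\<mu>2 \<Otimes>\<^sub>M (cgauss N \<Otimes>\<^sub>M cgauss N))"

definition rate1 :: "real \<Rightarrow> real \<Rightarrow> real \<Rightarrow> real \<Rightarrow> complex measure \<Rightarrow> complex measure \<Rightarrow> real" where
  "rate1 h11 h12 N b \<mu>1 \<mu>2 = prob_space.mutual_information (joint \<mu>1 \<mu>2 N) b borel borel
     (\<lambda>(x1, x2, z1, z2). x1) (\<lambda>(x1, x2, z1, z2). out1 h11 h12 x1 x2 z1)"

definition rate2 :: "real \<Rightarrow> real \<Rightarrow> real \<Rightarrow> real \<Rightarrow> complex measure \<Rightarrow> complex measure \<Rightarrow> real" where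
  "rate2 h21 h22 N b \<mu>1 \<mu>2 = prob_space.mutual_information (joint \<mu>1 \<mu>2 N) b borel borel
     (\<lambda>(x1, x2, z1, z2). x2) (\<lambda>(x1, x2, z1, z2). out2 h21 h22 x1 x2 z2)"

definition admissible :: "complex measure \<Rightarrow> real \<Rightarrow> real \<Rightarrow> bool" where
  "admissible \<mu> P h \<longleftrightarrow> prob_space \<mu> \<and> sets \<mu> = sets borel \<and>
     (\<integral>\<^sup>+ x. ennreal ((cmod x)\<^sup>2) \<partial>\<mu>) \<le> ennreal P \<and>
     (AE x in \<mu>. \<exists>m::nat. m \<ge> 1 \<and> (cmod x)\<^sup>2 = 2 * pi * real m / \<bar>h\<bar>)"

end

theory Submission
  imports Defs "HOL-Real_Asymp.Real_Asymp"
begin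

text \<open>
  If user 2 only transmits symbols with \<open>h12 \<bar>X2\<bar>\<^sup>2 \<in> 2\<pi>\<int>\<close>, the factor
  \<open>exp (i h12 \<bar>X2\<bar>\<^sup>2)\<close> is identically one and receiver 1 sees the single-user channel
  \<open>Y1 = focus h11 X1 + Z1\<close>, where \<open>focus h x = x exp (i h \<bar>x\<bar>\<^sup>2)\<close> merely rotates each circle
  \<open>\<bar>x\<bar> = r\<close>.  User 1 uses a uniform input on a polar grid of \<open>J\<^sup>2\<close> points (\<open>J\<close> rings with
  \<open>J\<close> phases each) whose radii are again on the focusing grid of \<open>h21\<close>; distinct points stay
  \<open>sqrt (4 N ln P)\<close> apart after \<open>focus\<close>.  A Bhattacharyya-type bound on the mutual information of
  a uniform input through Gaussian noise then gives \<open>I(X1;Y1) \<ge> log\<^sub>2 J\<^sup>2 - J\<^sup>2/(P ln 2)\<close>, and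
  \<open>J\<^sup>2 \<approx> P / ln P\<close> yields pre-log one.  User 2 is handled by the symmetry of the channel.
\<close>

text \<open>Lebesgue measure on \<open>\<complex>\<close> is the image of Lebesgue measure on \<open>\<real>\<^sup>2\<close>; this lets us
  evaluate complex Gaussian integrals as products of two real ones.\<close>

lemma lborel_complex:
  "distr (lborel :: (real \<times> real) measure) borel (\<lambda>p. Complex (fst p) (snd p)) = lborel"
proof (rule lborel_eqI[symmetric])
  fix l u :: complex assume lu: "\<And>b. b \<in> Basis \<Longrightarrow> l \<bullet> b \<le> u \<bullet> b"
  have "(\<lambda>p. Complex (fst p) (snd p)) -` box l u \<inter> space lborel = box (Re l, Im l) (Re u, Im u)"
    by (auto simp: box_def Basis_complex_def Basis_prod_def inner_complex_def mem_box)
  moreover have "(\<lambda>p. Complex (fst p) (snd p)) \<in> measurable lborel borel"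
    unfolding Complex_eq measurable_lborel2
    by (intro borel_measurable_continuous_onI continuous_intros)
  ultimately show "emeasure (distr lborel borel (\<lambda>p. Complex (fst p) (snd p))) (box l u)
      = ennreal (\<Prod>b\<in>Basis. (u - l) \<bullet> b)"
    using lu[of 1] lu[of \<i>]
    by (simp add: emeasure_distr emeasure_lborel_box_eq Basis_complex_def Basis_prod_def
        inner_complex_def prod.union_disjoint)
qed simp

lemma nn_integral_complex:
  fixes f :: "complex \<Rightarrow> ennreal"
  assumes f[measurable]: "f \<in> borel_measurable borel"
  shows "(\<integral>\<^sup>+ z. f z \<partial>lborel) = (\<integral>\<^sup>+ x. \<integral>\<^sup>+ y. f (Complex x y) \<partial>lborel \<partial>lborel)"
proof -
  have m: "(\<lambda>p. Complex (fst p) (snd p)) \<in> borel_measurable (borel :: (real \<times> real) measure)"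
    unfolding Complex_eq by (intro borel_measurable_continuous_onI continuous_intros)
  then have m': "(\<lambda>p. f (Complex (fst p) (snd p))) \<in> borel_measurable (lborel \<Otimes>\<^sub>M lborel)"
    using measurable_compose[OF m f] by (simp add: lborel_prod)
  have "(\<integral>\<^sup>+ z. f z \<partial>lborel)
      = (\<integral>\<^sup>+ z. f z \<partial>distr (lborel :: (real \<times> real) measure) borel (\<lambda>p. Complex (fst p) (snd p)))"
    by (simp add: lborel_complex)
  also have "\<dots> = (\<integral>\<^sup>+ p. f (Complex (fst p) (snd p)) \<partial>(lborel \<Otimes>\<^sub>M lborel))"
    using m by (subst nn_integral_distr) (auto simp: lborel_prod)
  also have "\<dots> = (\<integral>\<^sup>+ x. \<integral>\<^sup>+ y. f (Complex x y) \<partial>lborel \<partial>lborel)"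
    using m' by (subst lborel.nn_integral_fst[symmetric]) auto
  finally show ?thesis .
qed

lemma nn_integral_translate:
  fixes F :: "complex \<Rightarrow> ennreal"
  assumes [measurable]: "F \<in> borel_measurable borel"
  shows "(\<integral>\<^sup>+ z. F (z - c) \<partial>lborel) = (\<integral>\<^sup>+ z. F z \<partial>lborel)"
proof -
  have "(\<integral>\<^sup>+ z. F (z - c) \<partial>lborel) = (\<integral>\<^sup>+ z. F (z - c) \<partial>distr lborel borel ((+) c))"
    by (simp add: lborel_distr_plus)
  also have "\<dots> = (\<integral>\<^sup>+ z. F z \<partial>lborel)"
    by (subst nn_integral_distr) auto
  finally show ?thesis .
qed

definition gauss_pdf :: "real \<Rightarrow> complex \<Rightarrow> complex \<Rightarrow> real" where
  "gauss_pdf N c z = exp (- ((cmod (z - c))\<^sup>2 / N)) / (pi * N)"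

lemma gauss_pdf_pos: "N > 0 \<Longrightarrow> gauss_pdf N c z > 0"
  by (simp add: gauss_pdf_def)

lemma gauss_pdf_nonneg: "N > 0 \<Longrightarrow> 0 \<le> gauss_pdf N c z"
  using gauss_pdf_pos[of N c z] by simp

lemma gauss_pdf_measurable[measurable]: "(\<lambda>z. gauss_pdf N c z) \<in> borel_measurable borel"
  unfolding gauss_pdf_def by measurable

text \<open>The centred density factors as \<open>normal_density 0 (sqrt (N/2))\<close> in the real and the
  imaginary part, hence has total mass one; by translation invariance so has every mean.\<close>

lemma nn_integral_gauss_pdf_0:
  assumes N: "N > 0"
  shows "(\<integral>\<^sup>+ z. ennreal (gauss_pdf N 0 z) \<partial>lborel) = 1"
proof -
  define s where "s = sqrt (N / 2)"
  have s0: "s > 0" using N by (simp add: s_def)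
  have nd: "normal_density 0 s x = exp (- (x\<^sup>2 / N)) / sqrt (pi * N)" for x
  proof -
    have "2 * s\<^sup>2 = N" "2 * pi * s\<^sup>2 = pi * N" using N by (simp_all add: s_def)
    then show ?thesis unfolding normal_density_def by simp
  qed
  have factor: "gauss_pdf N 0 (Complex x y) = normal_density 0 s x * normal_density 0 s y" for x y
  proof -
    have e: "exp (- ((x\<^sup>2 + y\<^sup>2) / N)) = exp (- (x\<^sup>2 / N)) * exp (- (y\<^sup>2 / N))"
      by (simp add: exp_add[symmetric] add_divide_distrib)
    have "sqrt (pi * N) * sqrt (pi * N) = pi * N"
      using N by simp
    then show ?thesis
      unfolding nd gauss_pdf_def using N by (simp add: cmod_power2 e)
  qed
  have unit: "(\<integral>\<^sup>+ x. ennreal (normal_density 0 s x) \<partial>lborel) = 1"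
    using s0 by (subst nn_integral_eq_integral) (auto simp: normal_density_nonneg)
  have "(\<integral>\<^sup>+ z. ennreal (gauss_pdf N 0 z) \<partial>lborel) =
      (\<integral>\<^sup>+ x. \<integral>\<^sup>+ y. ennreal (normal_density 0 s x) * ennreal (normal_density 0 s y) \<partial>lborel \<partial>lborel)"
    by (subst nn_integral_complex) (auto simp: factor ennreal_mult normal_density_nonneg)
  also have "\<dots> = 1"
    by (simp add: nn_integral_cmult unit)
  finally show ?thesis .
qed

lemma nn_integral_gauss_pdf:
  assumes N: "N > 0"
  shows "(\<integral>\<^sup>+ z. ennreal (gauss_pdf N c z) \<partial>lborel) = 1"
proof -
  have "(\<integral>\<^sup>+ z. ennreal (gauss_pdf N c z) \<partial>lborel) = (\<integral>\<^sup>+ z. ennreal (gauss_pdf N 0 (z - c)) \<partial>lborel)"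
    by (simp add: gauss_pdf_def)
  also have "\<dots> = 1"
    using N by (subst nn_integral_translate) (auto simp: nn_integral_gauss_pdf_0)
  finally show ?thesis .
qed

lemma cgauss_eq_density: "cgauss N = density lborel (\<lambda>z. ennreal (gauss_pdf N 0 z))"
  by (simp add: cgauss_def gauss_pdf_def)

lemma prob_space_cgauss: "N > 0 \<Longrightarrow> prob_space (cgauss N)"
  unfolding cgauss_eq_density
  by (rule prob_spaceI) (simp add: emeasure_density nn_integral_gauss_pdf_0)

lemma sets_cgauss[simp, measurable_cong]: "sets (cgauss N) = sets borel"
  by (simp add: cgauss_def)

lemma nn_integral_cgauss_shift:
  fixes F :: "complex \<Rightarrow> ennreal"
  assumes [measurable]: "F \<in> borel_measurable borel"
  shows "(\<integral>\<^sup>+ z. F (c + z) \<partial>cgauss N) = (\<integral>\<^sup>+ y. ennreal (gauss_pdf N c y) * F y \<partial>lborel)"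
proof -
  have "(\<integral>\<^sup>+ z. F (c + z) \<partial>cgauss N) = (\<integral>\<^sup>+ z. ennreal (gauss_pdf N 0 z) * F (c + z) \<partial>lborel)"
    unfolding cgauss_eq_density by (subst nn_integral_density) auto
  also have "\<dots> = (\<integral>\<^sup>+ z. (\<lambda>y. ennreal (gauss_pdf N 0 (y - c)) * F y) (z - (- c)) \<partial>lborel)"
    by (simp add: add.commute)
  also have "\<dots> = (\<integral>\<^sup>+ y. ennreal (gauss_pdf N 0 (y - c)) * F y \<partial>lborel)"
    by (rule nn_integral_translate) measurable
  also have "\<dots> = (\<integral>\<^sup>+ y. ennreal (gauss_pdf N c y) * F y \<partial>lborel)"
    by (simp add: gauss_pdf_def)
  finally show ?thesis .
qed

text \<open>Bhattacharyya overlap of two Gaussians: by the parallelogram law the geometric mean of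
  the densities at \<open>c\<close> and \<open>d\<close> is a Gaussian at the midpoint, damped by
  \<open>exp (-\<bar>c - d\<bar>\<^sup>2 / (4 N))\<close>.\<close>

lemma sqrt_gauss_pdf_product:
  assumes N: "N > 0"
  shows "sqrt (gauss_pdf N c y * gauss_pdf N d y)
    = exp (- ((cmod (c - d))\<^sup>2 / (4 * N))) * gauss_pdf N ((c + d) / 2) y"
proof -
  have parallelogram: "(cmod (y - c))\<^sup>2 + (cmod (y - d))\<^sup>2
      = 2 * (cmod (y - (c + d) / 2))\<^sup>2 + (cmod (c - d))\<^sup>2 / 2"
    unfolding cmod_power2 by (simp add: power2_eq_square field_simps)
  have sqrt_exp: "sqrt (exp t) = exp (t / 2)" for t :: real
  proof -
    have "exp t = (exp (t/2))\<^sup>2" by (simp add: power2_eq_square exp_add[symmetric])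
    then show ?thesis by simp
  qed
  have "gauss_pdf N c y * gauss_pdf N d y
      = exp (- (((cmod (y - c))\<^sup>2 + (cmod (y - d))\<^sup>2) / N)) / (pi * N)\<^sup>2"
    by (simp add: gauss_pdf_def power2_eq_square exp_add[symmetric] add_divide_distrib)
  also have "\<dots> = exp (2 * (- ((cmod (y - (c + d) / 2))\<^sup>2 / N) - (cmod (c - d))\<^sup>2 / (4 * N)))
      / (pi * N)\<^sup>2"
    unfolding parallelogram using N by (simp add: field_simps)
  finally have "sqrt (gauss_pdf N c y * gauss_pdf N d y)
      = exp (- ((cmod (y - (c + d) / 2))\<^sup>2 / N) - (cmod (c - d))\<^sup>2 / (4 * N)) / (pi * N)"
    using N by (simp add: real_sqrt_divide sqrt_exp)
  also have "\<dots> = exp (- ((cmod (c - d))\<^sup>2 / (4 * N))) * gauss_pdf N ((c + d) / 2) y"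
    by (simp add: gauss_pdf_def exp_diff exp_minus field_simps)
  finally show ?thesis .
qed

lemma emeasure_distr_indicator:
  assumes T: "T \<in> measurable M N" and S: "S \<in> sets N"
  shows "emeasure (distr M N T) S = (\<integral>\<^sup>+ x. indicator S (T x) \<partial>M)"
proof -
  have "emeasure (distr M N T) S = (\<integral>\<^sup>+ x. indicator S x \<partial>distr M N T)"
    using S by simp
  also have "\<dots> = (\<integral>\<^sup>+ x. indicator S (T x) \<partial>M)"
    using T S by (intro nn_integral_distr) auto
  finally show ?thesis .
qed

lemma one_plus_sq_le_exp:
  fixes x :: real assumes x: "0 \<le> x"
  shows "1 + x\<^sup>2 \<le> exp x"
proof -
  have taylor: "1 + x/2 + (x/2)\<^sup>2 / 2 \<le> exp (x/2)"
    using x by (intro exp_lower_Taylor_quadratic) simp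
  have "(1 + x/2 + (x/2)\<^sup>2 / 2)\<^sup>2 \<le> (exp (x/2))\<^sup>2"
    using taylor x by (intro power_mono) auto
  also have "(exp (x/2))\<^sup>2 = exp x"
    by (simp add: power2_eq_square exp_add[symmetric])
  finally have sq: "(1 + x/2 + (x/2)\<^sup>2 / 2)\<^sup>2 \<le> exp x" .
  have "(1 + x/2 + (x/2)\<^sup>2 / 2)\<^sup>2 - (1 + x\<^sup>2) = x * ((x - 2)\<^sup>2 / 8 + 1/2) + x^4/64"
    by (simp add: power2_eq_square power4_eq_xxxx field_simps)
  moreover have "0 \<le> x * ((x - 2)\<^sup>2 / 8 + 1/2) + x^4/64"
    using x by (intro add_nonneg_nonneg mult_nonneg_nonneg) auto
  ultimately show ?thesis using sq by linarith
qed

lemma ln_one_plus_le_sqrt: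
  fixes t :: real assumes t: "0 \<le> t"
  shows "ln (1 + t) \<le> sqrt t"
proof -
  have "1 + t \<le> exp (sqrt t)"
    using one_plus_sq_le_exp[of "sqrt t"] t by simp
  then have "ln (1 + t) \<le> ln (exp (sqrt t))"
    using t by (subst ln_le_cancel_iff) auto
  then show ?thesis by simp
qed

lemma ln_one_plus_sum_le:
  assumes "finite B" "\<And>b. b \<in> B \<Longrightarrow> 0 \<le> t b"
  shows "ln (1 + (\<Sum>b\<in>B. t b)) \<le> (\<Sum>b\<in>B. sqrt (t b))"
proof -
  have "sqrt (\<Sum>b\<in>B. t b) \<le> (\<Sum>b\<in>B. sqrt (t b))"
    using assms
  proof (induction B rule: finite_induct)
    case (insert x F)
    have "sqrt (\<Sum>b\<in>insert x F. t b) = sqrt (t x + (\<Sum>b\<in>F. t b))"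
      using insert by simp
    also have "\<dots> \<le> sqrt (t x) + sqrt (\<Sum>b\<in>F. t b)"
      using insert by (intro sqrt_add_le_add_sqrt sum_nonneg) auto
    also have "\<dots> \<le> sqrt (t x) + (\<Sum>b\<in>F. sqrt (t b))"
      using insert by simp
    finally show ?case using insert by simp
  qed simp
  then show ?thesis
    using ln_one_plus_le_sqrt[of "\<Sum>b\<in>B. t b"] assms by (meson order_trans sum_nonneg)
qed

text \<open>The lower bound replaces \<open>ln (1 + \<Sum>\<^sub>b G b / G a)\<close> by the
  sum of square roots, whose integral is the Bhattacharyya overlap.\<close>

lemma log_likelihood_ratio_bounds:
  fixes G :: "'a \<Rightarrow> real"
  assumes A: "finite A" "a \<in> A" and G: "\<And>b. b \<in> A \<Longrightarrow> G b > 0"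
  defines "M \<equiv> real (card A)"
  shows "G a * (log 2 M + 1 / ln 2) - (\<Sum>b\<in>A. sqrt (G a * G b)) / ln 2
           \<le> G a * log 2 (G a / ((\<Sum>b\<in>A. G b) / M))"
    and "G a * log 2 (G a / ((\<Sum>b\<in>A. G b) / M)) \<le> G a * log 2 M"
proof -
  have Ga: "G a > 0" using G A by auto
  have M0: "M > 0" using A unfolding M_def by (auto simp: card_gt_0_iff)
  define B where "B = A - {a}"
  have B: "finite B" "a \<notin> B" "A = insert a B" using A unfolding B_def by auto
  define T where "T = (\<Sum>b\<in>B. G b / G a)"
  have T0: "0 \<le> T" unfolding T_def using G B(3) Ga by (intro sum_nonneg) (auto intro: less_imp_le)
  have sumG: "(\<Sum>b\<in>A. G b) = G a * (1 + T)"
    using B Ga by (simp add: T_def sum_divide_distrib[symmetric] algebra_simps)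
  have sqrt_factor: "sqrt (G a * G b) = G a * sqrt (G b / G a)" for b
  proof -
    have "G a * G b = (G a)\<^sup>2 * (G b / G a)" using Ga by (simp add: power2_eq_square field_simps)
    then have "sqrt (G a * G b) = sqrt ((G a)\<^sup>2) * sqrt (G b / G a)"
      by (simp only: real_sqrt_mult)
    then show ?thesis using Ga by simp
  qed
  have sumS: "(\<Sum>b\<in>A. sqrt (G a * G b)) = G a + G a * (\<Sum>b\<in>B. sqrt (G b / G a))"
    using B Ga by (simp add: sqrt_factor sum_distrib_left)
  have ln_le: "ln (1 + T) \<le> (\<Sum>b\<in>B. sqrt (G b / G a))"
    unfolding T_def using B G Ga by (intro ln_one_plus_sum_le) (auto intro: less_imp_le)
  have ratio: "G a / ((\<Sum>b\<in>A. G b) / M) = M / (1 + T)"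
  proof -
    have "G a / (G a * (1 + T) / M) = (G a * M) / (G a * (1 + T))"
      by (simp add: divide_divide_eq_right)
    also have "\<dots> = M / (1 + T)"
      using Ga by (simp add: mult_divide_mult_cancel_left)
    finally show ?thesis unfolding sumG .
  qed
  have lg: "log 2 (M / (1 + T)) = log 2 M - ln (1 + T) / ln 2"
    using T0 M0 by (simp add: log_def ln_div diff_divide_distrib)
  have "G a * (log 2 M + 1 / ln 2) - (\<Sum>b\<in>A. sqrt (G a * G b)) / ln 2
      = G a * (log 2 M - (\<Sum>b\<in>B. sqrt (G b / G a)) / ln 2)"
    unfolding sumS by (simp add: field_simps)
  also have "\<dots> \<le> G a * (log 2 M - ln (1 + T) / ln 2)"
    using Ga ln_le by (intro mult_left_mono) (auto intro: divide_right_mono)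
  finally show "G a * (log 2 M + 1 / ln 2) - (\<Sum>b\<in>A. sqrt (G a * G b)) / ln 2
           \<le> G a * log 2 (G a / ((\<Sum>b\<in>A. G b) / M))"
    unfolding ratio lg .
  show "G a * log 2 (G a / ((\<Sum>b\<in>A. G b) / M)) \<le> G a * log 2 M"
    unfolding ratio using Ga T0 M0 by (intro mult_left_mono) (auto simp: field_simps)
qed

lemma sum_pairwise_overlap_le:
  fixes e :: "'a \<Rightarrow> 'a \<Rightarrow> real" and \<delta> :: real
  assumes A: "finite A" and diag: "\<And>a. e a a = 1" and \<delta>0: "0 \<le> \<delta>"
    and off: "\<And>a b. a \<in> A \<Longrightarrow> b \<in> A \<Longrightarrow> a \<noteq> b \<Longrightarrow> e a b \<le> \<delta>"
  shows "(\<Sum>a\<in>A. \<Sum>b\<in>A. e a b) \<le> card A * (1 + card A * \<delta>)"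
proof -
  have row: "(\<Sum>b\<in>A. e a b) \<le> 1 + card A * \<delta>" if a: "a \<in> A" for a
  proof -
    have "(\<Sum>b\<in>A. e a b) = e a a + (\<Sum>b\<in>A - {a}. e a b)"
      using A a by (simp add: sum.remove)
    also have "(\<Sum>b\<in>A - {a}. e a b) \<le> (\<Sum>b\<in>A - {a}. \<delta>)"
      using a by (intro sum_mono) (auto intro!: off)
    also have "\<dots> \<le> card A * \<delta>"
      using \<delta>0 A by (auto intro!: mult_right_mono card_mono)
    finally show ?thesis by (simp add: diag)
  qed
  have "(\<Sum>a\<in>A. \<Sum>b\<in>A. e a b) \<le> (\<Sum>a\<in>A. 1 + card A * \<delta>)"
    by (intro sum_mono row)
  then show ?thesis by simp
qed

definition unif :: "complex set \<Rightarrow> complex measure" where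
  "unif A = distr (measure_pmf (pmf_of_set A)) borel (\<lambda>x. x)"

lemma sets_unif[simp, measurable_cong]: "sets (unif A) = sets borel"
  by (simp add: unif_def)

lemma prob_space_unif: "finite A \<Longrightarrow> A \<noteq> {} \<Longrightarrow> prob_space (unif A)"
  unfolding unif_def by (intro measure_pmf.prob_space_distr) simp

lemma nn_integral_unif:
  assumes "finite A" "A \<noteq> {}" "F \<in> borel_measurable borel"
  shows "(\<integral>\<^sup>+x. F x \<partial>unif A) = (\<Sum>a\<in>A. F a) / card A"
  using assms unfolding unif_def by (simp add: nn_integral_distr nn_integral_pmf_of_set)

lemma AE_unif:
  assumes "finite A" "A \<noteq> {}"
  shows "AE x in unif A. x \<in> A"
proof -
  have [measurable]: "A \<in> sets borel" using assms by (simp add: finite_imp_closed)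
  show ?thesis
    unfolding unif_def using assms
    by (subst AE_distr_iff) (auto simp: AE_measure_pmf_iff)
qed

text \<open>A single-user Gaussian channel \<open>Y = f X + Z\<close> whose input \<open>X\<close> is uniform on a finite
  constellation \<open>A\<close>.  With respect to \<open>unif A \<Otimes> lborel\<close> the pair \<open>(X, Y)\<close> has density
  \<open>channel_pdf\<close>, and the output \<open>Y\<close> alone has the Gaussian-mixture density \<open>output_pdf\<close>.\<close>

definition channel_pdf :: "real \<Rightarrow> (complex \<Rightarrow> complex) \<Rightarrow> complex \<times> complex \<Rightarrow> real" where
  "channel_pdf N f p = gauss_pdf N (f (fst p)) (snd p)"

definition output_pdf :: "real \<Rightarrow> (complex \<Rightarrow> complex) \<Rightarrow> complex set \<Rightarrow> complex \<Rightarrow> real" where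
  "output_pdf N f A y = (\<Sum>b\<in>A. gauss_pdf N (f b) y) / card A"

lemma channel_pdf_pos: "N > 0 \<Longrightarrow> channel_pdf N f p > 0"
  by (simp add: channel_pdf_def gauss_pdf_pos)

lemma channel_pdf_measurable[measurable]:
  assumes [measurable]: "f \<in> borel_measurable borel"
  shows "channel_pdf N f \<in> borel_measurable (borel \<Otimes>\<^sub>M borel)"
  unfolding channel_pdf_def gauss_pdf_def by measurable

lemma output_pdf_measurable[measurable]: "output_pdf N f A \<in> borel_measurable borel"
  unfolding output_pdf_def gauss_pdf_def by measurable

lemma emeasure_distr_density:
  assumes [measurable]: "k \<in> borel_measurable M" "T \<in> measurable M N" "B \<in> sets N"
  shows "emeasure (distr (density M k) N T) B = (\<integral>\<^sup>+ p. k p * indicator B (T p) \<partial>M)"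
  by (subst emeasure_distr_indicator) (auto simp: nn_integral_density)

lemma channel_law:
  fixes f :: "complex \<Rightarrow> complex"
  assumes N: "N > 0" and A: "finite A" "A \<noteq> {}" and f[measurable]: "f \<in> borel_measurable borel"
  shows "distr (unif A \<Otimes>\<^sub>M cgauss N) (borel \<Otimes>\<^sub>M borel) (\<lambda>(x, z). (x, f x + z))
       = density (unif A \<Otimes>\<^sub>M lborel) (channel_pdf N f)"
proof (rule measure_eqI)
  interpret U: prob_space "unif A" using A by (rule prob_space_unif)
  interpret G: prob_space "cgauss N" using N by (rule prob_space_cgauss)
  show "sets (distr (unif A \<Otimes>\<^sub>M cgauss N) (borel \<Otimes>\<^sub>M borel) (\<lambda>(x, z). (x, f x + z)))
      = sets (density (unif A \<Otimes>\<^sub>M lborel) (channel_pdf N f))"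
    by (simp add: sets_pair_measure_cong[OF sets_unif sets_lborel])
  fix S assume "S \<in> sets (distr (unif A \<Otimes>\<^sub>M cgauss N) (borel \<Otimes>\<^sub>M borel) (\<lambda>(x, z). (x, f x + z)))"
  then have S[measurable]: "S \<in> sets (borel \<Otimes>\<^sub>M borel)" by simp
  have "emeasure (distr (unif A \<Otimes>\<^sub>M cgauss N) (borel \<Otimes>\<^sub>M borel) (\<lambda>(x, z). (x, f x + z))) S
      = (\<integral>\<^sup>+ x. \<integral>\<^sup>+ z. indicator S (x, f x + z) \<partial>cgauss N \<partial>unif A)"
    by (subst emeasure_distr_indicator) (auto simp: G.nn_integral_fst[symmetric])
  also have "\<dots> = (\<integral>\<^sup>+ x. \<integral>\<^sup>+ y. ennreal (gauss_pdf N (f x) y) * indicator S (x, y) \<partial>lborel \<partial>unif A)"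
    by (intro nn_integral_cong nn_integral_cgauss_shift) measurable
  also have "\<dots> = emeasure (density (unif A \<Otimes>\<^sub>M lborel) (channel_pdf N f)) S"
    by (subst emeasure_density)
      (auto simp: channel_pdf_def lborel.nn_integral_fst[symmetric] gauss_pdf_def)
  finally show "emeasure (distr (unif A \<Otimes>\<^sub>M cgauss N) (borel \<Otimes>\<^sub>M borel) (\<lambda>(x, z). (x, f x + z))) S
      = emeasure (density (unif A \<Otimes>\<^sub>M lborel) (channel_pdf N f)) S" .
qed

lemma nn_integral_channel_pdf_row:
  "N > 0 \<Longrightarrow> (\<integral>\<^sup>+ y. ennreal (channel_pdf N f (x, y)) \<partial>lborel) = 1"
  by (simp add: channel_pdf_def nn_integral_gauss_pdf)

lemma channel_input_law:
  assumes N: "N > 0" and A: "finite A" "A \<noteq> {}" and f[measurable]: "f \<in> borel_measurable borel"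
  shows "distr (density (unif A \<Otimes>\<^sub>M lborel) (channel_pdf N f)) borel fst = unif A"
proof (rule measure_eqI)
  fix B assume "B \<in> sets (distr (density (unif A \<Otimes>\<^sub>M lborel) (channel_pdf N f)) borel fst)"
  then have B[measurable]: "B \<in> sets borel" by simp
  have "emeasure (distr (density (unif A \<Otimes>\<^sub>M lborel) (channel_pdf N f)) borel fst) B
      = (\<integral>\<^sup>+ x. \<integral>\<^sup>+ y. ennreal (channel_pdf N f (x, y)) * indicator B x \<partial>lborel \<partial>unif A)"
    by (subst emeasure_distr_density) (auto simp: lborel.nn_integral_fst[symmetric])
  also have "\<dots> = (\<integral>\<^sup>+ x. indicator B x \<partial>unif A)"
    using N by (simp add: nn_integral_multc nn_integral_channel_pdf_row)
  finally show "emeasure (distr (density (unif A \<Otimes>\<^sub>M lborel) (channel_pdf N f)) borel fst) B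
      = emeasure (unif A) B"
    by simp
qed simp

lemma channel_output_law:
  assumes N: "N > 0" and A: "finite A" "A \<noteq> {}" and f[measurable]: "f \<in> borel_measurable borel"
  shows "distr (density (unif A \<Otimes>\<^sub>M lborel) (channel_pdf N f)) borel snd
    = density lborel (output_pdf N f A)"
proof (rule measure_eqI)
  fix B assume "B \<in> sets (distr (density (unif A \<Otimes>\<^sub>M lborel) (channel_pdf N f)) borel snd)"
  then have B[measurable]: "B \<in> sets borel" by simp
  have "emeasure (distr (density (unif A \<Otimes>\<^sub>M lborel) (channel_pdf N f)) borel snd) B
      = (\<integral>\<^sup>+ x. \<integral>\<^sup>+ y. ennreal (gauss_pdf N (f x) y) * indicator B y \<partial>lborel \<partial>unif A)"
    by (subst emeasure_distr_density)
      (auto simp: lborel.nn_integral_fst[symmetric] channel_pdf_def gauss_pdf_def)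
  also have "\<dots> = (\<Sum>a\<in>A. \<integral>\<^sup>+ y. ennreal (gauss_pdf N (f a) y) * indicator B y \<partial>lborel) / card A"
    using A by (subst nn_integral_unif) (auto simp: gauss_pdf_def)
  also have "\<dots> = (\<integral>\<^sup>+ y. (\<Sum>a\<in>A. ennreal (gauss_pdf N (f a) y) * indicator B y) / card A \<partial>lborel)"
    by (subst nn_integral_divide) (auto simp: nn_integral_sum gauss_pdf_def)
  also have "\<dots> = (\<integral>\<^sup>+ y. ennreal (output_pdf N f A y) * indicator B y \<partial>lborel)"
  proof (rule nn_integral_cong)
    fix y
    have "ennreal (output_pdf N f A y) = (\<Sum>a\<in>A. ennreal (gauss_pdf N (f a) y)) / card A"
      using N A unfolding output_pdf_def
      by (simp add: divide_ennreal gauss_pdf_nonneg sum_nonneg ennreal_of_nat_eq_real_of_nat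
          card_gt_0_iff)
    then show "(\<Sum>a\<in>A. ennreal (gauss_pdf N (f a) y) * indicator B y) / card A
        = ennreal (output_pdf N f A y) * indicator B y"
      by (simp add: sum_distrib_left[symmetric] ennreal_times_divide mult.commute)
  qed
  finally show "emeasure (distr (density (unif A \<Otimes>\<^sub>M lborel) (channel_pdf N f)) borel snd) B
      = emeasure (density lborel (output_pdf N f A)) B"
    by (simp add: emeasure_density)
qed simp

lemma integrable_channel_pdf:
  assumes N: "N > 0" and A: "finite A" "A \<noteq> {}" and f[measurable]: "f \<in> borel_measurable borel"
  shows "integrable (unif A \<Otimes>\<^sub>M lborel) (channel_pdf N f)"
    and "integral\<^sup>L (unif A \<Otimes>\<^sub>M lborel) (channel_pdf N f) = 1"
proof -
  interpret U: prob_space "unif A" using A by (rule prob_space_unif)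
  have "(\<integral>\<^sup>+ p. ennreal (channel_pdf N f p) \<partial>(unif A \<Otimes>\<^sub>M lborel))
      = (\<integral>\<^sup>+ x. \<integral>\<^sup>+ y. ennreal (channel_pdf N f (x, y)) \<partial>lborel \<partial>unif A)"
    by (subst lborel.nn_integral_fst[symmetric]) auto
  also have "\<dots> = ennreal 1"
    using N U.emeasure_space_1 by (simp add: nn_integral_channel_pdf_row)
  finally have "(\<integral>\<^sup>+ p. ennreal (channel_pdf N f p) \<partial>(unif A \<Otimes>\<^sub>M lborel)) = ennreal 1" .
  then show "integrable (unif A \<Otimes>\<^sub>M lborel) (channel_pdf N f)"
    and "integral\<^sup>L (unif A \<Otimes>\<^sub>M lborel) (channel_pdf N f) = 1"
    using N by (subst (asm) nn_integral_eq_integrable; auto intro: less_imp_le channel_pdf_pos)+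
qed

lemma nn_integral_overlap_row:
  assumes N: "N > 0" and A: "finite A"
  shows "(\<integral>\<^sup>+ y. ennreal (\<Sum>b\<in>A. sqrt (gauss_pdf N c y * gauss_pdf N (f b) y)) \<partial>lborel)
    = (\<Sum>b\<in>A. ennreal (exp (- ((cmod (c - f b))\<^sup>2 / (4 * N)))))"
proof -
  have "ennreal (\<Sum>b\<in>A. sqrt (gauss_pdf N c y * gauss_pdf N (f b) y))
      = (\<Sum>b\<in>A. ennreal (exp (- ((cmod (c - f b))\<^sup>2 / (4 * N))))
          * ennreal (gauss_pdf N ((c + f b) / 2) y))" for y
    using N A by (subst sum_ennreal[symmetric])
      (auto simp: sqrt_gauss_pdf_product gauss_pdf_nonneg ennreal_mult)
  then have "(\<integral>\<^sup>+ y. ennreal (\<Sum>b\<in>A. sqrt (gauss_pdf N c y * gauss_pdf N (f b) y)) \<partial>lborel)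
      = (\<Sum>b\<in>A. \<integral>\<^sup>+ y. ennreal (exp (- ((cmod (c - f b))\<^sup>2 / (4 * N))))
          * ennreal (gauss_pdf N ((c + f b) / 2) y) \<partial>lborel)"
    by (simp del: sum_ennreal) (rule nn_integral_sum, auto simp: gauss_pdf_def)
  also have "\<dots> = (\<Sum>b\<in>A. ennreal (exp (- ((cmod (c - f b))\<^sup>2 / (4 * N)))))"
    using N by (simp add: nn_integral_cmult nn_integral_gauss_pdf del: sum_ennreal)
  finally show ?thesis .
qed

lemma integral_overlap:
  assumes N: "N > 0" and A: "finite A" "A \<noteq> {}" and f[measurable]: "f \<in> borel_measurable borel"
  defines "S \<equiv> \<lambda>p. \<Sum>b\<in>A. sqrt (channel_pdf N f p * gauss_pdf N (f b) (snd p))"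
  shows "integrable (unif A \<Otimes>\<^sub>M lborel) S"
    and "integral\<^sup>L (unif A \<Otimes>\<^sub>M lborel) S
      = (\<Sum>a\<in>A. \<Sum>b\<in>A. exp (- ((cmod (f a - f b))\<^sup>2 / (4 * N)))) / card A"
proof -
  interpret U: prob_space "unif A" using A by (rule prob_space_unif)
  define e where "e = (\<lambda>a b. exp (- ((cmod (f a - f b))\<^sup>2 / (4 * N))))"
  have S[measurable]: "S \<in> borel_measurable (unif A \<Otimes>\<^sub>M lborel)"
    unfolding S_def channel_pdf_def gauss_pdf_def by measurable
  have "(\<integral>\<^sup>+ p. ennreal (S p) \<partial>(unif A \<Otimes>\<^sub>M lborel))
      = (\<integral>\<^sup>+ x. \<integral>\<^sup>+ y. ennreal (S (x, y)) \<partial>lborel \<partial>unif A)"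
    by (rule lborel.nn_integral_fst[symmetric]) measurable
  also have "\<dots> = (\<integral>\<^sup>+ x. (\<Sum>b\<in>A. ennreal (e x b)) \<partial>unif A)"
    using nn_integral_overlap_row[OF N A(1)] by (simp add: S_def e_def channel_pdf_def)
  also have "\<dots> = (\<Sum>a\<in>A. \<Sum>b\<in>A. ennreal (e a b)) / card A"
    using A by (subst nn_integral_unif) (auto simp: e_def)
  also have "\<dots> = ennreal ((\<Sum>a\<in>A. \<Sum>b\<in>A. e a b) / card A)"
  proof -
    have "(\<Sum>a\<in>A. \<Sum>b\<in>A. ennreal (e a b)) = ennreal (\<Sum>a\<in>A. \<Sum>b\<in>A. e a b)"
      by (simp add: e_def sum_nonneg)
    then show ?thesis
      using A by (simp add: ennreal_of_nat_eq_real_of_nat divide_ennreal e_def sum_nonneg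
          card_gt_0_iff)
  qed
  finally have nn: "(\<integral>\<^sup>+ p. ennreal (S p) \<partial>(unif A \<Otimes>\<^sub>M lborel))
      = ennreal ((\<Sum>a\<in>A. \<Sum>b\<in>A. e a b) / card A)" .
  have "0 \<le> S p" for p
    unfolding S_def using N
    by (intro sum_nonneg real_sqrt_ge_zero mult_nonneg_nonneg gauss_pdf_nonneg less_imp_le
        channel_pdf_pos)
  moreover have "0 \<le> (\<Sum>a\<in>A. \<Sum>b\<in>A. e a b) / card A"
    by (intro divide_nonneg_nonneg sum_nonneg) (auto simp: e_def)
  ultimately show "integrable (unif A \<Otimes>\<^sub>M lborel) S"
    and "integral\<^sup>L (unif A \<Otimes>\<^sub>M lborel) S = (\<Sum>a\<in>A. \<Sum>b\<in>A. e a b) / card A"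
    using nn by (subst (asm) nn_integral_eq_integrable; auto)+
qed

lemma channel_log_likelihood_bounds:
  assumes N: "N > 0" and A: "finite A" "A \<noteq> {}"
  defines "M \<equiv> real (card A)"
  shows "AE p in unif A \<Otimes>\<^sub>M lborel.
    channel_pdf N f p * (log 2 M + 1 / ln 2)
      - (\<Sum>b\<in>A. sqrt (channel_pdf N f p * gauss_pdf N (f b) (snd p))) / ln 2
      \<le> channel_pdf N f p * log 2 (channel_pdf N f p / output_pdf N f A (snd p)) \<and>
    channel_pdf N f p * log 2 (channel_pdf N f p / output_pdf N f A (snd p))
      \<le> channel_pdf N f p * log 2 M"
proof -
  interpret U: prob_space "unif A" using A by (rule prob_space_unif)
  interpret UL: pair_sigma_finite "unif A" lborel by unfold_locales
  have "AE p in unif A \<Otimes>\<^sub>M lborel. fst p \<in> A"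
  proof (rule UL.AE_pair_measure)
    have [measurable]: "A \<in> sets borel" using A by (simp add: finite_imp_closed)
    show "{p \<in> space (unif A \<Otimes>\<^sub>M lborel). fst p \<in> A} \<in> sets (unif A \<Otimes>\<^sub>M lborel)"
      by measurable
    show "AE x in unif A. AE y in lborel. fst (x, y) \<in> A"
      using AE_unif[OF A] by eventually_elim simp
  qed
  then show ?thesis
  proof eventually_elim
    case (elim p)
    have "\<And>b. b \<in> A \<Longrightarrow> gauss_pdf N (f b) (snd p) > 0"
      using N by (rule gauss_pdf_pos)
    from log_likelihood_ratio_bounds[of A "fst p" "\<lambda>b. gauss_pdf N (f b) (snd p)",
        OF A(1) elim this]
    show ?case
      unfolding M_def channel_pdf_def output_pdf_def by simp
  qed
qed

lemma KL_channel_lower_bound: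
  assumes N: "N > 0" and A: "finite A" "A \<noteq> {}" and f[measurable]: "f \<in> borel_measurable borel"
  shows "log 2 (card A) + 1 / ln 2
      - (\<Sum>a\<in>A. \<Sum>b\<in>A. exp (- ((cmod (f a - f b))\<^sup>2 / (4 * N)))) / card A / ln 2
    \<le> KL_divergence 2 (density (unif A \<Otimes>\<^sub>M lborel) (\<lambda>p. output_pdf N f A (snd p)))
                      (density (unif A \<Otimes>\<^sub>M lborel) (channel_pdf N f))"
proof -
  interpret U: prob_space "unif A" using A by (rule prob_space_unif)
  interpret UL: pair_sigma_finite "unif A" lborel by unfold_locales
  define \<Omega> where "\<Omega> = unif A \<Otimes>\<^sub>M (lborel :: complex measure)"
  define M where "M = real (card A)"
  define g where "g = channel_pdf N f"
  define F where "F = (\<lambda>p::complex \<times> complex. output_pdf N f A (snd p))"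
  define S where "S = (\<lambda>p. \<Sum>b\<in>A. sqrt (channel_pdf N f p * gauss_pdf N (f b) (snd p)))"
  define H where "H = (\<lambda>p. g p * log 2 (g p / F p))"
  define L where "L = (\<lambda>p. g p * (log 2 M + 1 / ln 2) - S p / ln 2)"
  define U where "U = (\<lambda>p. g p * log 2 M)"
  have [measurable]: "g \<in> borel_measurable \<Omega>" "F \<in> borel_measurable \<Omega>"
    unfolding g_def F_def \<Omega>_def channel_pdf_def gauss_pdf_def by measurable
  have F_pos: "F p > 0" for p
    unfolding F_def output_pdf_def using A N
    by (auto intro!: divide_pos_pos sum_pos gauss_pdf_pos simp: card_gt_0_iff)
  have KL: "KL_divergence 2 (density \<Omega> F) (density \<Omega> g) = integral\<^sup>L \<Omega> H"
    using channel_pdf_pos[OF N] F_pos less_imp_neq[OF F_pos]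
      \<open>g \<in> borel_measurable \<Omega>\<close> \<open>F \<in> borel_measurable \<Omega>\<close>
    unfolding H_def \<Omega>_def g_def
    by (intro UL.KL_density_density) (auto simp: less_imp_le intro!: AE_I2)
  have bounds: "AE p in \<Omega>. L p \<le> H p \<and> H p \<le> U p"
    using channel_log_likelihood_bounds[OF N A, of f]
    unfolding \<Omega>_def L_def H_def U_def S_def g_def F_def M_def .
  note g_int = integrable_channel_pdf[OF N A f, folded \<Omega>_def g_def]
  note S_int = integral_overlap[OF N A f, folded \<Omega>_def S_def]
  have L_int: "integrable \<Omega> L" and U_int: "integrable \<Omega> U"
    unfolding L_def U_def using g_int S_int by auto
  have H_int: "integrable \<Omega> H"
  proof (rule Bochner_Integration.integrable_bound[where f="\<lambda>p. \<bar>U p\<bar> + \<bar>L p\<bar>"])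
    show "integrable \<Omega> (\<lambda>p. \<bar>U p\<bar> + \<bar>L p\<bar>)"
      using L_int U_int by auto
    show "AE p in \<Omega>. norm (H p) \<le> norm (\<bar>U p\<bar> + \<bar>L p\<bar>)"
      using bounds by eventually_elim auto
    show "H \<in> borel_measurable \<Omega>"
      unfolding H_def by measurable
  qed
  have "log 2 M + 1 / ln 2 - (\<Sum>a\<in>A. \<Sum>b\<in>A. exp (- ((cmod (f a - f b))\<^sup>2 / (4 * N)))) / M / ln 2
      = integral\<^sup>L \<Omega> L"
    unfolding L_def using g_int S_int by (simp add: M_def)
  also have "\<dots> \<le> integral\<^sup>L \<Omega> H"
    using L_int H_int bounds by (intro integral_mono_AE) auto
  finally show ?thesis
    using KL unfolding \<Omega>_def F_def g_def M_def by simp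
qed

lemma prob_space_channel_density:
  assumes N: "N > 0" and A: "finite A" "A \<noteq> {}" and f[measurable]: "f \<in> borel_measurable borel"
  shows "prob_space (density (unif A \<Otimes>\<^sub>M lborel) (channel_pdf N f))"
proof -
  interpret U: prob_space "unif A" using A by (rule prob_space_unif)
  interpret G: prob_space "cgauss N" using N by (rule prob_space_cgauss)
  interpret UG: pair_prob_space "unif A" "cgauss N" by unfold_locales
  show ?thesis
    unfolding channel_law[OF N A f, symmetric] by (rule UG.prob_space_distr) measurable
qed

lemma channel_marginals_product:
  assumes N: "N > 0" and A: "finite A" "A \<noteq> {}" and f[measurable]: "f \<in> borel_measurable borel"
  shows "unif A \<Otimes>\<^sub>M density lborel (output_pdf N f A)
    = density (unif A \<Otimes>\<^sub>M lborel) (\<lambda>p. output_pdf N f A (snd p))"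
proof -
  interpret D: prob_space "density (unif A \<Otimes>\<^sub>M lborel) (channel_pdf N f)"
    using N A f by (rule prob_space_channel_density)
  interpret Y: prob_space "density lborel (output_pdf N f A)"
    unfolding channel_output_law[OF N A f, symmetric] by (rule D.prob_space_distr) simp
  have "unif A \<Otimes>\<^sub>M density lborel (output_pdf N f A)
      = density (unif A) (\<lambda>_. 1) \<Otimes>\<^sub>M density lborel (output_pdf N f A)"
    by (simp add: density_1)
  also have "\<dots> = density (unif A \<Otimes>\<^sub>M lborel) (\<lambda>(x, y). 1 * ennreal (output_pdf N f A y))"
    by (rule pair_measure_density)
      (auto intro: Y.sigma_finite_measure_axioms lborel.sigma_finite_measure_axioms)
  finally show ?thesis
    by (simp add: case_prod_beta')
qed

lemma mutual_information_channel_lower_bound: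
  fixes M :: "'a measure" and X Y :: "'a \<Rightarrow> complex" and \<delta> :: real
  assumes P: "prob_space M"
    and N: "N > 0" and A: "finite A" "A \<noteq> {}" and f[measurable]: "f \<in> borel_measurable borel"
    and \<delta>0: "0 \<le> \<delta>"
    and \<delta>: "\<And>a b. a \<in> A \<Longrightarrow> b \<in> A \<Longrightarrow> a \<noteq> b \<Longrightarrow> exp (- ((cmod (f a - f b))\<^sup>2 / (4 * N))) \<le> \<delta>"
    and X[measurable]: "X \<in> borel_measurable M" and Y[measurable]: "Y \<in> borel_measurable M"
    and law: "distr M (borel \<Otimes>\<^sub>M borel) (\<lambda>\<omega>. (X \<omega>, Y \<omega>)) =
              distr (unif A \<Otimes>\<^sub>M cgauss N) (borel \<Otimes>\<^sub>M borel) (\<lambda>(x, z). (x, f x + z))"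
  shows "log 2 (card A) - card A * \<delta> / ln 2 \<le> prob_space.mutual_information M 2 borel borel X Y"
proof -
  interpret prob_space M by (rule P)
  note joint = law[unfolded channel_law[OF N A f]]
  have "distr M borel X = distr (distr M (borel \<Otimes>\<^sub>M borel) (\<lambda>\<omega>. (X \<omega>, Y \<omega>))) borel fst"
    by (subst distr_distr) (auto simp: comp_def)
  then have X_law: "distr M borel X = unif A"
    unfolding joint using channel_input_law[OF N A f] by simp
  have "distr M borel Y = distr (distr M (borel \<Otimes>\<^sub>M borel) (\<lambda>\<omega>. (X \<omega>, Y \<omega>))) borel snd"
    by (subst distr_distr) (auto simp: comp_def)
  then have Y_law: "distr M borel Y = density lborel (output_pdf N f A)"
    unfolding joint using channel_output_law[OF N A f] by simp
  have MI: "mutual_information 2 borel borel X Y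
      = KL_divergence 2 (density (unif A \<Otimes>\<^sub>M lborel) (\<lambda>p. output_pdf N f A (snd p)))
          (density (unif A \<Otimes>\<^sub>M lborel) (channel_pdf N f))"
    unfolding mutual_information_def X_law Y_law joint channel_marginals_product[OF N A f] ..
  have "log 2 (card A) - card A * \<delta> / ln 2
      \<le> log 2 (card A) + 1 / ln 2
        - (\<Sum>a\<in>A. \<Sum>b\<in>A. exp (- ((cmod (f a - f b))\<^sup>2 / (4 * N)))) / card A / ln 2"
  proof -
    have "(\<Sum>a\<in>A. \<Sum>b\<in>A. exp (- ((cmod (f a - f b))\<^sup>2 / (4 * N)))) \<le> card A * (1 + card A * \<delta>)"
      using \<delta>0 \<delta> by (intro sum_pairwise_overlap_le A(1)) auto
    then have "(\<Sum>a\<in>A. \<Sum>b\<in>A. exp (- ((cmod (f a - f b))\<^sup>2 / (4 * N)))) / card A / ln 2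
        \<le> (1 + card A * \<delta>) / ln 2"
      using A by (intro divide_right_mono) (auto simp: field_simps card_gt_0_iff)
    then show ?thesis by (simp add: add_divide_distrib)
  qed
  then show ?thesis
    using MI KL_channel_lower_bound[OF N A f] by linarith
qed

lemma sets_joint:
  "sets U = sets borel \<Longrightarrow> sets V = sets borel \<Longrightarrow>
   sets (joint U V N) = sets (borel \<Otimes>\<^sub>M (borel \<Otimes>\<^sub>M (borel \<Otimes>\<^sub>M borel)))"
  unfolding joint_def by (intro sets_pair_measure_cong) simp_all

lemma prob_space_joint:
  assumes "prob_space U" "prob_space V" "N > 0"
  shows "prob_space (joint U V N)"
proof -
  interpret U: prob_space U by fact
  interpret V: prob_space V by fact
  interpret G: prob_space "cgauss N" using assms(3) by (rule prob_space_cgauss)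
  interpret GG: pair_prob_space "cgauss N" "cgauss N" by unfold_locales
  interpret VGG: pair_prob_space V "cgauss N \<Otimes>\<^sub>M cgauss N" by unfold_locales
  interpret UVGG: pair_prob_space U "V \<Otimes>\<^sub>M (cgauss N \<Otimes>\<^sub>M cgauss N)" by unfold_locales
  show ?thesis unfolding joint_def by unfold_locales
qed

lemma nn_integral_joint:
  assumes U: "prob_space U" and V: "prob_space V" and N: "N > 0"
    and F: "F \<in> borel_measurable (joint U V N)"
  shows "(\<integral>\<^sup>+ \<omega>. F \<omega> \<partial>joint U V N) =
    (\<integral>\<^sup>+ x1. \<integral>\<^sup>+ x2. \<integral>\<^sup>+ z1. \<integral>\<^sup>+ z2. F (x1, x2, z1, z2) \<partial>cgauss N \<partial>cgauss N \<partial>V \<partial>U)"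
proof -
  interpret U: prob_space U by (rule U)
  interpret V: prob_space V by (rule V)
  interpret G: prob_space "cgauss N" using N by (rule prob_space_cgauss)
  interpret GG: pair_prob_space "cgauss N" "cgauss N" by unfold_locales
  interpret VGG: pair_prob_space V "cgauss N \<Otimes>\<^sub>M cgauss N" by unfold_locales
  have F1: "F \<in> borel_measurable (U \<Otimes>\<^sub>M (V \<Otimes>\<^sub>M (cgauss N \<Otimes>\<^sub>M cgauss N)))"
    using F by (simp add: joint_def)
  have F2: "(\<lambda>t. F (x1, t)) \<in> borel_measurable (V \<Otimes>\<^sub>M (cgauss N \<Otimes>\<^sub>M cgauss N))"
    if "x1 \<in> space U" for x1
    using F1 that by (rule measurable_Pair2)
  have F3: "(\<lambda>zz. F (x1, x2, zz)) \<in> borel_measurable (cgauss N \<Otimes>\<^sub>M cgauss N)"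
    if "x1 \<in> space U" "x2 \<in> space V" for x1 x2
    using F2[OF that(1)] that(2) by (rule measurable_Pair2)
  have "(\<integral>\<^sup>+ \<omega>. F \<omega> \<partial>joint U V N)
      = (\<integral>\<^sup>+ x1. \<integral>\<^sup>+ t. F (x1, t) \<partial>(V \<Otimes>\<^sub>M (cgauss N \<Otimes>\<^sub>M cgauss N)) \<partial>U)"
    unfolding joint_def using F1 by (rule VGG.nn_integral_fst[symmetric])
  also have "\<dots> = (\<integral>\<^sup>+ x1. \<integral>\<^sup>+ x2. \<integral>\<^sup>+ zz. F (x1, x2, zz) \<partial>(cgauss N \<Otimes>\<^sub>M cgauss N) \<partial>V \<partial>U)"
    using F2 by (intro nn_integral_cong GG.nn_integral_fst[symmetric]) auto
  also have "\<dots> = (\<integral>\<^sup>+ x1. \<integral>\<^sup>+ x2. \<integral>\<^sup>+ z1. \<integral>\<^sup>+ z2. F (x1, x2, z1, z2) \<partial>cgauss N \<partial>cgauss N \<partial>V \<partial>U)"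
    using F3 by (intro nn_integral_cong G.nn_integral_fst[symmetric]) auto
  finally show ?thesis .
qed

lemma emeasure_distr_joint:
  assumes U: "prob_space U" and V: "prob_space V" and N: "N > 0"
    and \<phi>: "\<phi> \<in> measurable (joint U V N) M" and S: "S \<in> sets M"
  shows "emeasure (distr (joint U V N) M \<phi>) S = (\<integral>\<^sup>+ x1. \<integral>\<^sup>+ x2. \<integral>\<^sup>+ z1. \<integral>\<^sup>+ z2.
      indicator S (\<phi> (x1, x2, z1, z2)) \<partial>cgauss N \<partial>cgauss N \<partial>V \<partial>U)"
proof -
  have "emeasure (distr (joint U V N) M \<phi>) S = (\<integral>\<^sup>+ \<omega>. indicator S (\<phi> \<omega>) \<partial>joint U V N)"
    using \<phi> S by (rule emeasure_distr_indicator)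
  also have "\<dots> = (\<integral>\<^sup>+ x1. \<integral>\<^sup>+ x2. \<integral>\<^sup>+ z1. \<integral>\<^sup>+ z2.
      indicator S (\<phi> (x1, x2, z1, z2)) \<partial>cgauss N \<partial>cgauss N \<partial>V \<partial>U)"
    using measurable_compose[OF \<phi> borel_measurable_indicator[OF S]]
    by (subst nn_integral_joint[OF U V N]) (simp_all add: comp_def)
  finally show ?thesis .
qed

lemma joint_swap:
  assumes U: "prob_space U" "sets U = sets borel" and V: "prob_space V" "sets V = sets borel"
    and N: "N > 0"
  shows "distr (joint U V N) (borel \<Otimes>\<^sub>M (borel \<Otimes>\<^sub>M (borel \<Otimes>\<^sub>M borel)))
      (\<lambda>(x1, x2, z1, z2). (x2, x1, z2, z1)) = joint V U N"
    (is "distr ?J ?B ?\<sigma> = _")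
proof (rule measure_eqI)
  interpret U: prob_space U by (rule U(1))
  interpret V: prob_space V by (rule V(1))
  interpret G: prob_space "cgauss N" using N by (rule prob_space_cgauss)
  interpret GG: pair_sigma_finite "cgauss N" "cgauss N" by unfold_locales
  interpret UV: pair_sigma_finite U V by unfold_locales
  show "sets (distr ?J ?B ?\<sigma>) = sets (joint V U N)"
    using sets_joint[OF V(2) U(2)] by simp
  fix S assume "S \<in> sets (distr ?J ?B ?\<sigma>)"
  then have S[measurable]: "S \<in> sets ?B" by simp
  have [measurable]: "?\<sigma> \<in> measurable ?J ?B"
    by (simp add: measurable_cong_sets[OF sets_joint[OF U(2) V(2)] refl])
  note [measurable_cong] = U(2) V(2)
  have inner[measurable]:
    "(\<lambda>(z1, z2). indicator S (x2, x1, z2, z1)) \<in> borel_measurable (cgauss N \<Otimes>\<^sub>M cgauss N)"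
    for x1 x2 by measurable
  have outer: "(\<lambda>(x1, x2). \<integral>\<^sup>+ z2. \<integral>\<^sup>+ z1. indicator S (x2, x1, z2, z1) \<partial>cgauss N \<partial>cgauss N)
      \<in> borel_measurable (U \<Otimes>\<^sub>M V)"
    by measurable
  have "emeasure (distr ?J ?B ?\<sigma>) S
      = (\<integral>\<^sup>+ x1. \<integral>\<^sup>+ x2. \<integral>\<^sup>+ z1. \<integral>\<^sup>+ z2. indicator S (x2, x1, z2, z1) \<partial>cgauss N \<partial>cgauss N \<partial>V \<partial>U)"
    by (subst emeasure_distr_joint[OF U(1) V(1) N]) simp_all
  also have "\<dots> = (\<integral>\<^sup>+ x1. \<integral>\<^sup>+ x2. \<integral>\<^sup>+ z2. \<integral>\<^sup>+ z1. indicator S (x2, x1, z2, z1)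
      \<partial>cgauss N \<partial>cgauss N \<partial>V \<partial>U)"
    using GG.Fubini'[OF inner] by simp
  also have "\<dots> = (\<integral>\<^sup>+ x2. \<integral>\<^sup>+ x1. \<integral>\<^sup>+ z2. \<integral>\<^sup>+ z1. indicator S (x2, x1, z2, z1)
      \<partial>cgauss N \<partial>cgauss N \<partial>U \<partial>V)"
    using UV.Fubini'[OF outer] by simp
  also have "\<dots> = (\<integral>\<^sup>+ \<omega>. indicator S \<omega> \<partial>joint V U N)"
    by (subst nn_integral_joint[OF V(1) U(1) N])
      (simp_all add: measurable_cong_sets[OF sets_joint[OF V(2) U(2)] refl])
  also have "\<dots> = emeasure (joint V U N) S"
    using sets_joint[OF V(2) U(2)] by simp
  finally show "emeasure (distr ?J ?B ?\<sigma>) S = emeasure (joint V U N) S" .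
qed

lemma rate2_eq_rate1_swapped:
  assumes U: "prob_space U" "sets U = sets borel" and V: "prob_space V" "sets V = sets borel"
    and N: "N > 0"
  shows "rate2 h21 h22 N b U V = rate1 h22 h21 N b V U"
proof -
  let ?B = "borel \<Otimes>\<^sub>M (borel \<Otimes>\<^sub>M (borel \<Otimes>\<^sub>M borel)) :: (complex \<times> complex \<times> complex \<times> complex) measure"
  let ?\<sigma> = "\<lambda>(x1, x2, z1, z2). (x2, x1, z2, z1) :: complex \<times> complex \<times> complex \<times> complex"
  let ?J = "joint U V N"
  have [measurable]: "?\<sigma> \<in> measurable ?J ?B"
    by (simp add: measurable_cong_sets[OF sets_joint[OF U(2) V(2)] refl])
  have swap: "joint V U N = distr ?J ?B ?\<sigma>"
    using joint_swap[OF U V N] by simp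
  have distr_swap: "distr (joint V U N) S T = distr ?J S T'"
    if "T \<in> measurable ?B S" and "\<And>x1 x2 z1 z2. T (x2, x1, z2, z1) = T' (x1, x2, z1, z2)"
    for S :: "'a measure" and T T'
  proof -
    have "T \<circ> ?\<sigma> = T'" using that(2) by (auto simp: fun_eq_iff)
    then show ?thesis unfolding swap using that(1) by (subst distr_distr) auto
  qed
  have out: "out1 h22 h21 x2 x1 z2 = out2 h21 h22 x1 x2 z2" for x1 x2 z2
    by (simp add: out1_def out2_def add.commute)
  have [measurable]: "(\<lambda>(x1, x2, z1, z2). out1 h22 h21 x1 x2 z1) \<in> borel_measurable ?B"
    unfolding out1_def cis_conv_exp by measurable
  have "distr (joint V U N) borel (\<lambda>(x1, x2, z1, z2). x1) = distr ?J borel (\<lambda>(x1, x2, z1, z2). x2)"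
    by (rule distr_swap) auto
  moreover have "distr (joint V U N) borel (\<lambda>(x1, x2, z1, z2). out1 h22 h21 x1 x2 z1)
      = distr ?J borel (\<lambda>(x1, x2, z1, z2). out2 h21 h22 x1 x2 z2)"
    by (rule distr_swap, measurable) (simp add: out)
  moreover have "distr (joint V U N) (borel \<Otimes>\<^sub>M borel)
        (\<lambda>\<omega>. ((\<lambda>(x1, x2, z1, z2). x1) \<omega>, (\<lambda>(x1, x2, z1, z2). out1 h22 h21 x1 x2 z1) \<omega>))
      = distr ?J (borel \<Otimes>\<^sub>M borel)
        (\<lambda>\<omega>. ((\<lambda>(x1, x2, z1, z2). x2) \<omega>, (\<lambda>(x1, x2, z1, z2). out2 h21 h22 x1 x2 z2) \<omega>))"
    by (rule distr_swap, measurable) (simp add: out)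
  ultimately show ?thesis
    unfolding rate1_def rate2_def
      prob_space.mutual_information_def[OF prob_space_joint[OF U(1) V(1) N]]
      prob_space.mutual_information_def[OF prob_space_joint[OF V(1) U(1) N]]
    by simp
qed

lemma cis_focus:
  fixes h a :: real and m :: nat
  assumes h: "h \<noteq> 0" and x: "(cmod x)\<^sup>2 = 2 * pi * real m / \<bar>h\<bar>"
  shows "cis (a + h * (cmod x)\<^sup>2) = cis a"
proof -
  have "h * (cmod x)\<^sup>2 = 2 * pi * (sgn h * real m)"
    using h unfolding x by (cases "h > 0") (auto simp: field_simps)
  moreover have "sgn h * real m \<in> \<int>"
    by (cases "h > 0"; cases "h < 0") (auto simp: sgn_if)
  ultimately show ?thesis by (simp add: cis_mult[symmetric])
qed

definition focus :: "real \<Rightarrow> complex \<Rightarrow> complex" where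
  "focus h x = x * cis (h * (cmod x)\<^sup>2)"

lemma focus_measurable[measurable]: "focus h \<in> borel_measurable borel"
  unfolding focus_def cis_conv_exp by measurable

lemma cmod_focus: "cmod (focus h x) = cmod x"
  by (simp add: focus_def norm_mult)

lemma admissible_focuses_out1:
  assumes h12: "h12 \<noteq> 0" and V: "admissible V P h12"
  shows "AE x2 in V. \<forall>x1 z1. out1 h11 h12 x1 x2 z1 = focus h11 x1 + z1"
  using V unfolding admissible_def
proof (elim conjE eventually_mono)
  fix x2 assume "\<exists>m::nat. m \<ge> 1 \<and> (cmod x2)\<^sup>2 = 2 * pi * real m / \<bar>h12\<bar>"
  then obtain m :: nat where "(cmod x2)\<^sup>2 = 2 * pi * real m / \<bar>h12\<bar>" by blast
  then have "out1 h11 h12 x1 x2 z1 = focus h11 x1 + z1" for x1 z1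
    unfolding out1_def focus_def using cis_focus[OF h12] by simp
  then show "\<forall>x1 z1. out1 h11 h12 x1 x2 z1 = focus h11 x1 + z1" by blast
qed

lemma interference_focusing:
  assumes N: "N > 0" and h12: "h12 \<noteq> 0" and A: "finite A" "A \<noteq> {}"
    and V: "admissible V P h12"
  shows "distr (joint (unif A) V N) (borel \<Otimes>\<^sub>M borel)
      (\<lambda>\<omega>. ((\<lambda>(x1, x2, z1, z2). x1) \<omega>, (\<lambda>(x1, x2, z1, z2). out1 h11 h12 x1 x2 z1) \<omega>))
     = distr (unif A \<Otimes>\<^sub>M cgauss N) (borel \<Otimes>\<^sub>M borel) (\<lambda>(x, z). (x, focus h11 x + z))"
    (is "distr ?J _ ?\<phi> = distr _ _ ?\<psi>")
proof (rule measure_eqI)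
  have V_prob: "prob_space V" and V_sets: "sets V = sets borel"
    using V unfolding admissible_def by auto
  interpret U: prob_space "unif A" using A by (rule prob_space_unif)
  interpret V: prob_space V by (rule V_prob)
  interpret G: prob_space "cgauss N" using N by (rule prob_space_cgauss)
  have \<phi>_meas: "?\<phi> \<in> measurable ?J (borel \<Otimes>\<^sub>M borel)"
    unfolding measurable_cong_sets[OF sets_joint[OF sets_unif V_sets] refl] out1_def cis_conv_exp
    by measurable
  have \<psi>_meas[measurable]: "?\<psi> \<in> measurable (unif A \<Otimes>\<^sub>M cgauss N) (borel \<Otimes>\<^sub>M borel)"
    by measurable
  show "sets (distr ?J (borel \<Otimes>\<^sub>M borel) ?\<phi>) = sets (distr (unif A \<Otimes>\<^sub>M cgauss N) (borel \<Otimes>\<^sub>M borel) ?\<psi>)"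
    by simp
  fix S assume "S \<in> sets (distr ?J (borel \<Otimes>\<^sub>M borel) ?\<phi>)"
  then have S[measurable]: "S \<in> sets (borel \<Otimes>\<^sub>M borel)" by simp
  note focused = admissible_focuses_out1[OF h12 V, of h11]
  have "emeasure (distr ?J (borel \<Otimes>\<^sub>M borel) ?\<phi>) S
      = (\<integral>\<^sup>+ x1. \<integral>\<^sup>+ x2. \<integral>\<^sup>+ z1. \<integral>\<^sup>+ z2. indicator S (x1, out1 h11 h12 x1 x2 z1)
          \<partial>cgauss N \<partial>cgauss N \<partial>V \<partial>unif A)"
    by (subst emeasure_distr_joint[OF prob_space_unif[OF A] V_prob N \<phi>_meas S]) simp
  also have "\<dots> = (\<integral>\<^sup>+ x1. \<integral>\<^sup>+ x2. \<integral>\<^sup>+ z1. \<integral>\<^sup>+ z2. indicator S (x1, focus h11 x1 + z1)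
          \<partial>cgauss N \<partial>cgauss N \<partial>V \<partial>unif A)"
    by (rule nn_integral_cong, rule nn_integral_cong_AE, rule eventually_mono[OF focused]) simp
  also have "\<dots> = (\<integral>\<^sup>+ x1. \<integral>\<^sup>+ z1. indicator S (x1, focus h11 x1 + z1) \<partial>cgauss N \<partial>unif A)"
    using G.emeasure_space_1 V.emeasure_space_1 by simp
  also have "\<dots> = emeasure (distr (unif A \<Otimes>\<^sub>M cgauss N) (borel \<Otimes>\<^sub>M borel) ?\<psi>) S"
    by (subst emeasure_distr_indicator) (auto simp: G.nn_integral_fst[symmetric])
  finally show "emeasure (distr ?J (borel \<Otimes>\<^sub>M borel) ?\<phi>) S
      = emeasure (distr (unif A \<Otimes>\<^sub>M cgauss N) (borel \<Otimes>\<^sub>M borel) ?\<psi>) S" .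
qed

lemma rate1_lower_bound:
  fixes \<delta> :: real
  assumes N: "N > 0" and h12: "h12 \<noteq> 0" and A: "finite A" "A \<noteq> {}"
    and V: "admissible V P h12" and \<delta>0: "0 \<le> \<delta>"
    and \<delta>: "\<And>a b. a \<in> A \<Longrightarrow> b \<in> A \<Longrightarrow> a \<noteq> b \<Longrightarrow>
      exp (- ((cmod (focus h11 a - focus h11 b))\<^sup>2 / (4 * N))) \<le> \<delta>"
  shows "log 2 (card A) - card A * \<delta> / ln 2 \<le> rate1 h11 h12 N 2 (unif A) V"
proof -
  have V_prob: "prob_space V" and V_sets: "sets V = sets borel"
    using V unfolding admissible_def by auto
  have sJ: "sets (joint (unif A) V N) = sets (borel \<Otimes>\<^sub>M (borel \<Otimes>\<^sub>M (borel \<Otimes>\<^sub>M borel)))"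
    by (rule sets_joint[OF sets_unif V_sets])
  show ?thesis
    unfolding rate1_def
  proof (rule mutual_information_channel_lower_bound[OF _ N A focus_measurable \<delta>0 \<delta>])
    show "prob_space (joint (unif A) V N)"
      using A N V_prob by (intro prob_space_joint prob_space_unif)
    show "(\<lambda>(x1, x2, z1, z2). x1) \<in> borel_measurable (joint (unif A) V N)"
      unfolding measurable_cong_sets[OF sJ refl] by measurable
    show "(\<lambda>(x1, x2, z1, z2). out1 h11 h12 x1 x2 z1) \<in> borel_measurable (joint (unif A) V N)"
      unfolding measurable_cong_sets[OF sJ refl] out1_def cis_conv_exp by measurable
  qed (use interference_focusing[OF N h12 A V] in auto)
qed

lemma sin_ge_half:
  fixes x :: real assumes "0 \<le> x" "x \<le> 1/2"
  shows "x / 2 \<le> sin x"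
proof -
  have "\<bar>sin x - (\<Sum>m<3. sin_coeff m * x ^ m)\<bar> \<le> inverse (fact 3) * \<bar>x\<bar> ^ 3"
    by (rule Maclaurin_sin_bound)
  moreover have "(\<Sum>m<3. sin_coeff m * x ^ m) = x"
    by (simp add: numeral_3_eq_3 sin_coeff_def)
  moreover have "x ^ 3 \<le> x / 4"
  proof -
    have "x * x\<^sup>2 \<le> x * (1/2)\<^sup>2"
      using assms by (intro mult_left_mono power_mono) auto
    then show ?thesis by (simp add: power3_eq_cube power2_eq_square)
  qed
  ultimately have "\<bar>sin x - x\<bar> \<le> x / 24" using assms by (simp add: fact_numeral)
  then show ?thesis using assms by linarith
qed

lemma chord_sq: "(cmod (cis a - cis b))\<^sup>2 = 4 * (sin ((a - b) / 2))\<^sup>2"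
proof -
  have "cis a - cis b = cis b * (cis (a - b) - 1)"
    by (simp add: algebra_simps cis_mult)
  then have "(cmod (cis a - cis b))\<^sup>2 = (cos (a - b) - 1)\<^sup>2 + (sin (a - b))\<^sup>2"
    by (simp add: norm_mult cmod_power2)
  also have "\<dots> = 2 - 2 * cos (a - b)"
    by (simp add: power2_eq_square algebra_simps)
  also have "cos (a - b) = cos (2 * ((a - b) / 2))"
    by (simp only: times_divide_eq_right nonzero_mult_div_cancel_left zero_neq_numeral)
  also have "\<dots> = 1 - 2 * (sin ((a - b) / 2))\<^sup>2"
    by (rule cos_double_sin)
  finally show ?thesis by simp
qed

lemma phase_separation:
  fixes J k k' :: nat
  assumes J: "J \<ge> 1" and k: "k < J" "k' < J" "k \<noteq> k'"
  shows "1 / (4 * (real J)\<^sup>2) \<le> (cmod (cis (real k / J) - cis (real k' / J)))\<^sup>2"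
proof -
  define t where "t = \<bar>real k - real k'\<bar> / (2 * J)"
  have Jp: "real J > 0" using J by simp
  have t1: "1 / (2 * J) \<le> t"
    unfolding t_def using k Jp by (intro divide_right_mono) (auto simp: abs_if)
  have t2: "t \<le> 1/2" and t0: "0 \<le> t"
    unfolding t_def using k Jp by (auto simp: field_simps abs_if)
  have "(real k / J - real k' / J) / 2 = t \<or> (real k / J - real k' / J) / 2 = - t"
    unfolding t_def using Jp by (auto simp: field_simps abs_if)
  then have eq: "(sin ((real k / J - real k' / J) / 2))\<^sup>2 = (sin t)\<^sup>2"
    by auto
  have "1 / (4 * J) \<le> t / 2" using t1 by (simp add: field_simps)
  also have "\<dots> \<le> sin t" using t0 t2 by (rule sin_ge_half)
  finally have "(1 / (4 * J))\<^sup>2 \<le> (sin t)\<^sup>2"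
    using Jp by (intro power_mono) auto
  then show ?thesis unfolding chord_sq eq by (simp add: power2_eq_square)
qed

text \<open>Self-phase modulation rotates every ring rigidly, so distinct
  points stay at distance at least \<open>d / 2\<close> after \<open>focus\<close>.\<close>

definition ring_point :: "real \<Rightarrow> nat \<Rightarrow> nat \<times> nat \<Rightarrow> complex" where
  "ring_point d J = (\<lambda>(j, k). complex_of_real (d * real j) * cis (real k / real J))"

definition ring_constellation :: "real \<Rightarrow> nat \<Rightarrow> complex set" where
  "ring_constellation d J = ring_point d J ` ({J..<2*J} \<times> {0..<J})"

lemma cmod_ring_point: "d \<ge> 0 \<Longrightarrow> cmod (ring_point d J (j, k)) = d * real j"
  by (simp add: ring_point_def norm_mult)

lemma ring_point_separation:
  fixes d :: real and J j j' k k' :: nat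
  assumes d: "d \<ge> 0" and J: "J \<ge> 1" and j: "J \<le> j" "J \<le> j'" and k: "k < J" "k' < J"
    and ne: "(j, k) \<noteq> (j', k')"
  shows "d\<^sup>2 / 4 \<le> (cmod (focus h (ring_point d J (j, k)) - focus h (ring_point d J (j', k'))))\<^sup>2"
    (is "_ \<le> (cmod (?a - ?b))\<^sup>2")
proof (cases "j = j'")
  case False \<comment> \<open>different rings: the moduli differ by at least \<open>d\<close>\<close>
  have "d * 1 \<le> d * \<bar>real j - real j'\<bar>"
    using False d by (intro mult_left_mono) auto
  also have "\<dots> = \<bar>cmod ?a - cmod ?b\<bar>"
    using d by (simp add: cmod_focus cmod_ring_point abs_mult flip: right_diff_distrib)
  also have "\<dots> \<le> cmod (?a - ?b)"
    by (rule norm_triangle_ineq3)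
  finally have "d\<^sup>2 \<le> (cmod (?a - ?b))\<^sup>2"
    using d by (intro power_mono) auto
  moreover have "d\<^sup>2 / 4 \<le> d\<^sup>2" by simp
  ultimately show ?thesis by linarith
next
  case True \<comment> \<open>same ring of radius \<open>\<rho> \<ge> d J\<close>: the phases differ by at least \<open>1 / J\<close>\<close>
  then have kk: "k \<noteq> k'" using ne by auto
  define \<rho> where "\<rho> = d * real j"
  have \<rho>0: "\<rho> \<ge> 0" using d by (simp add: \<rho>_def)
  have "?a - ?b = complex_of_real \<rho> * cis (h * \<rho>\<^sup>2) * (cis (real k / J) - cis (real k' / J))"
    using True d \<rho>0
    by (simp add: focus_def cmod_ring_point \<rho>_def) (simp add: ring_point_def algebra_simps)
  then have "(cmod (?a - ?b))\<^sup>2 = \<rho>\<^sup>2 * (cmod (cis (real k / J) - cis (real k' / J)))\<^sup>2"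
    using \<rho>0 by (simp add: norm_mult power_mult_distrib)
  also have "\<dots> \<ge> \<rho>\<^sup>2 * (1 / (4 * (real J)\<^sup>2))"
    using phase_separation[OF J k kk] by (intro mult_left_mono) auto
  finally have far: "\<rho>\<^sup>2 / (4 * (real J)\<^sup>2) \<le> (cmod (?a - ?b))\<^sup>2"
    by simp
  have "d\<^sup>2 * (real J)\<^sup>2 \<le> d\<^sup>2 * (real j)\<^sup>2"
    using j J by (intro mult_left_mono power_mono) auto
  then have "d\<^sup>2 / 4 \<le> \<rho>\<^sup>2 / (4 * (real J)\<^sup>2)"
    using J unfolding \<rho>_def by (simp add: field_simps power_mult_distrib)
  then show ?thesis using far by simp
qed

lemma ring_constellation_separation:
  assumes d: "d \<ge> 0" and J: "J \<ge> 1"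
    and a: "a \<in> ring_constellation d J" and b: "b \<in> ring_constellation d J" and ne: "a \<noteq> b"
  shows "d\<^sup>2 / 4 \<le> (cmod (focus h a - focus h b))\<^sup>2"
proof -
  obtain j k where a': "a = ring_point d J (j, k)" "J \<le> j" "k < J"
    using a by (auto simp: ring_constellation_def)
  obtain j' k' where b': "b = ring_point d J (j', k')" "J \<le> j'" "k' < J"
    using b by (auto simp: ring_constellation_def)
  have "(j, k) \<noteq> (j', k')" using ne a' b' by auto
  then show ?thesis
    unfolding a' b' using ring_point_separation[OF d J a'(2) b'(2) a'(3) b'(3)] by simp
qed

lemma card_ring_constellation:
  assumes d: "d > 0" and J: "J \<ge> 1"
  shows "card (ring_constellation d J) = J * J"
proof -
  have "inj_on (ring_point d J) ({J..<2*J} \<times> {0..<J})"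
  proof (rule inj_onI, rule ccontr)
    fix x y assume x: "x \<in> {J..<2*J} \<times> {0..<J}" and y: "y \<in> {J..<2*J} \<times> {0..<J}"
      and eq: "ring_point d J x = ring_point d J y" and ne: "x \<noteq> y"
    have "d\<^sup>2 / 4 \<le> (cmod (focus 0 (ring_point d J x) - focus 0 (ring_point d J y)))\<^sup>2"
      using ring_point_separation[of d J "fst x" "fst y" "snd x" "snd y" 0] d J x y ne
      by (auto simp: prod_eq_iff)
    then show False using eq d by simp
  qed
  then show ?thesis unfolding ring_constellation_def by (simp add: card_image)
qed

lemma ring_constellation_norm:
  assumes d: "d \<ge> 0" and x: "x \<in> ring_constellation d J"
  obtains j where "J \<le> j" "j < 2 * J" "(cmod x)\<^sup>2 = d\<^sup>2 * (real j)\<^sup>2"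
  using x d by (auto simp: ring_constellation_def cmod_ring_point power_mult_distrib)

text \<open>Choice of the constellation for power \<open>P\<close>: the ring spacing \<open>sqrt c \<cdot> s\<close> with
  \<open>s \<approx> sqrt (16 N ln P / c)\<close> makes distinct points \<open>sqrt (4 N ln P)\<close> apart, so their Gaussian
  overlaps are at most \<open>1 / P\<close>; the number \<open>J \<approx> sqrt (P / (4 c s\<^sup>2))\<close> of rings exhausts the
  power budget.  Then \<open>J\<^sup>2\<close> grows like \<open>P / ln P\<close>, which gives pre-log one.\<close>

definition radial_step :: "real \<Rightarrow> real \<Rightarrow> real \<Rightarrow> nat" where
  "radial_step N c P = nat \<lceil>sqrt (16 * N * ln P / c)\<rceil> + 1"

definition ring_count :: "real \<Rightarrow> real \<Rightarrow> real \<Rightarrow> nat" where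
  "ring_count N c P = nat \<lfloor>sqrt (P / (4 * c * (real (radial_step N c P))\<^sup>2))\<rfloor>"

definition codebook :: "real \<Rightarrow> real \<Rightarrow> real \<Rightarrow> complex set" where
  "codebook N c P = ring_constellation (sqrt c * real (radial_step N c P)) (ring_count N c P)"

definition high_snr :: "real \<Rightarrow> real \<Rightarrow> real \<Rightarrow> bool" where
  "high_snr N c P \<longleftrightarrow> N < P \<and> 1 \<le> P \<and> 16 * (128 * N * ln P + 32 * c) \<le> P"

definition rate_lb :: "real \<Rightarrow> real \<Rightarrow> real \<Rightarrow> real" where
  "rate_lb N c P = (ln P - ln (512 * N * ln P + 128 * c)) / ln 2 - 1 / (4 * c * ln 2)"

lemma radial_step_bounds:
  fixes c N P :: real
  assumes c: "c > 0" and N: "N > 0" and P: "1 \<le> P"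
  defines "s \<equiv> real (radial_step N c P)"
  shows "1 \<le> s" "16 * N * ln P \<le> c * s\<^sup>2" "4 * c * s\<^sup>2 \<le> 128 * N * ln P + 32 * c"
proof -
  define X where "X = 16 * N * ln P / c"
  have X0: "X \<ge> 0" unfolding X_def using c N P by simp
  have s: "s = real_of_int \<lceil>sqrt X\<rceil> + 1"
    unfolding s_def radial_step_def X_def[symmetric] using X0 by simp
  show "1 \<le> s" unfolding s_def radial_step_def by simp
  have "sqrt X \<le> s" using s by linarith
  then have "(sqrt X)\<^sup>2 \<le> s\<^sup>2" using X0 by (intro power_mono) auto
  then show "16 * N * ln P \<le> c * s\<^sup>2"
    unfolding X_def using c X0 by (simp add: X_def field_simps)
  have "s \<le> sqrt X + 2" using s by linarith
  then have "s\<^sup>2 \<le> (sqrt X + 2)\<^sup>2" using \<open>1 \<le> s\<close> by (intro power_mono) auto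
  also have "\<dots> \<le> 2 * X + 8"
    using X0 sum_squares_bound[of "sqrt X" 2] by (simp add: power2_eq_square algebra_simps)
  finally show "4 * c * s\<^sup>2 \<le> 128 * N * ln P + 32 * c"
    using c unfolding X_def by (simp add: field_simps)
qed

lemma floor_sqrt_bounds:
  fixes Y :: real assumes Y: "4 \<le> Y"
  defines "J \<equiv> nat \<lfloor>sqrt Y\<rfloor>"
  shows "1 \<le> J" "(real J)\<^sup>2 \<le> Y" "Y / 4 \<le> (real J)\<^sup>2"
proof -
  have sqrtY: "2 \<le> sqrt Y" using real_sqrt_le_mono[OF Y] by simp
  have "0 \<le> \<lfloor>sqrt Y\<rfloor>" using Y by simp
  then have J: "real J = real_of_int \<lfloor>sqrt Y\<rfloor>" unfolding J_def by (simp only: of_nat_nat)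
  show "1 \<le> J" using J sqrtY by linarith
  have "real J \<le> sqrt Y" using J by linarith
  then have "(real J)\<^sup>2 \<le> (sqrt Y)\<^sup>2" by (intro power_mono) auto
  then show "(real J)\<^sup>2 \<le> Y" using Y by simp
  have "sqrt Y / 2 \<le> real J" using J sqrtY by linarith
  then have "(sqrt Y / 2)\<^sup>2 \<le> (real J)\<^sup>2" using Y sqrtY by (intro power_mono) auto
  then show "Y / 4 \<le> (real J)\<^sup>2" using Y by (simp add: power_divide)
qed

lemma codebook_parameters:
  fixes c N P :: real
  assumes c: "c > 0" and N: "N > 0" and P: "high_snr N c P"
  defines "s \<equiv> real (radial_step N c P)" and "J \<equiv> ring_count N c P"
  shows "1 \<le> J" "4 * c * s\<^sup>2 * (real J)\<^sup>2 \<le> P"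
    "P / (4 * (128 * N * ln P + 32 * c)) \<le> (real J)\<^sup>2"
proof -
  define W where "W = 128 * N * ln P + 32 * c"
  define Y where "Y = P / (4 * c * s\<^sup>2)"
  have P1: "1 \<le> P" and PW: "16 * W \<le> P" using P unfolding high_snr_def W_def by auto
  note s = radial_step_bounds[OF c N P1, folded s_def]
  have cs: "0 < 4 * c * s\<^sup>2" using c s(1) by simp
  have W0: "0 < W" unfolding W_def using c N P1 by (simp add: add_nonneg_pos)
  have "P / W \<le> Y" unfolding Y_def W_def using s(3) cs P1 by (intro divide_left_mono) auto
  moreover have "16 \<le> P / W" using PW W0 by (simp add: field_simps)
  ultimately have Y: "4 \<le> Y" "P / W \<le> Y" by auto
  have J_eq: "J = nat \<lfloor>sqrt Y\<rfloor>" unfolding J_def ring_count_def Y_def s_def ..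
  note J = floor_sqrt_bounds[OF Y(1), folded J_eq]
  show "1 \<le> J" by (rule J(1))
  show "4 * c * s\<^sup>2 * (real J)\<^sup>2 \<le> P"
    using J(2) cs unfolding Y_def by (simp add: field_simps)
  show "P / (4 * W) \<le> (real J)\<^sup>2"
    using J(3) Y(2) by (simp add: field_simps)
qed

lemma codebook_finite: "finite (codebook N c P)"
  by (simp add: codebook_def ring_constellation_def)

lemma codebook_nonempty:
  "c > 0 \<Longrightarrow> N > 0 \<Longrightarrow> high_snr N c P \<Longrightarrow> codebook N c P \<noteq> {}"
  using codebook_parameters(1)[of c N P] by (auto simp: codebook_def ring_constellation_def)

lemma card_codebook:
  "c > 0 \<Longrightarrow> N > 0 \<Longrightarrow> high_snr N c P
    \<Longrightarrow> card (codebook N c P) = ring_count N c P * ring_count N c P"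
  using codebook_parameters(1)[of c N P] radial_step_bounds(1)[of c N P]
  unfolding codebook_def high_snr_def by (intro card_ring_constellation) auto

lemma codebook_separation:
  assumes c: "c > 0" and N: "N > 0" and P: "high_snr N c P"
    and a: "a \<in> codebook N c P" and b: "b \<in> codebook N c P" and ne: "a \<noteq> b"
  shows "exp (- ((cmod (focus h a - focus h b))\<^sup>2 / (4 * N))) \<le> 1 / P"
proof -
  define s where "s = real (radial_step N c P)"
  have P1: "1 \<le> P" using P unfolding high_snr_def by auto
  have "c * s\<^sup>2 / 4 \<le> (cmod (focus h a - focus h b))\<^sup>2"
    using ring_constellation_separation[of "sqrt c * s" "ring_count N c P" a b h]
      codebook_parameters(1)[OF c N P] a b ne c
    unfolding codebook_def s_def by (simp add: power_mult_distrib)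
  moreover have "16 * N * ln P \<le> c * s\<^sup>2"
    unfolding s_def using radial_step_bounds(2)[OF c N P1] .
  ultimately have "ln P \<le> (cmod (focus h a - focus h b))\<^sup>2 / (4 * N)"
    using N by (simp add: field_simps)
  then have "exp (- ((cmod (focus h a - focus h b))\<^sup>2 / (4 * N))) \<le> exp (- ln P)"
    by simp
  also have "\<dots> = 1 / P" using P1 by (simp add: exp_minus inverse_eq_divide)
  finally show ?thesis .
qed

lemma codebook_point_norm:
  assumes c: "c > 0" and x: "x \<in> codebook N c P"
  obtains j where "ring_count N c P \<le> j" "j < 2 * ring_count N c P"
    "(cmod x)\<^sup>2 = c * (real (radial_step N c P))\<^sup>2 * (real j)\<^sup>2"
  using ring_constellation_norm[of "sqrt c * radial_step N c P" x] x c
  unfolding codebook_def by (auto simp: power_mult_distrib)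

lemma codebook_power:
  assumes c: "c > 0" and N: "N > 0" and P: "high_snr N c P" and x: "x \<in> codebook N c P"
  shows "(cmod x)\<^sup>2 \<le> P"
proof -
  define s where "s = real (radial_step N c P)"
  define J where "J = real (ring_count N c P)"
  obtain j where j: "j < 2 * ring_count N c P" "(cmod x)\<^sup>2 = c * s\<^sup>2 * (real j)\<^sup>2"
    using codebook_point_norm[OF c x] unfolding s_def by blast
  have "(real j)\<^sup>2 \<le> (2 * J)\<^sup>2"
    using j(1) unfolding J_def by (intro power_mono) auto
  then have "c * s\<^sup>2 * (real j)\<^sup>2 \<le> c * s\<^sup>2 * (2 * J)\<^sup>2"
    using c by (intro mult_left_mono) auto
  also have "\<dots> = 4 * c * s\<^sup>2 * J\<^sup>2"
    by (simp add: power_mult_distrib)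
  also have "\<dots> \<le> P"
    using codebook_parameters(2)[OF c N P] unfolding s_def J_def .
  finally show ?thesis unfolding j(2) .
qed

lemma codebook_on_grid:
  assumes c: "c > 0" and N: "N > 0" and P: "high_snr N c P" and x: "x \<in> codebook N c P"
  shows "\<exists>m::nat. m \<ge> 1 \<and> (cmod x)\<^sup>2 = c * real m"
proof -
  define s where "s = radial_step N c P"
  obtain j where j: "ring_count N c P \<le> j" "(cmod x)\<^sup>2 = c * (real s)\<^sup>2 * (real j)\<^sup>2"
    using codebook_point_norm[OF c x] unfolding s_def by blast
  have "1 \<le> s" "1 \<le> j"
    using radial_step_bounds(1)[OF c N] codebook_parameters(1)[OF c N P] P j(1)
    unfolding s_def by (auto simp: high_snr_def)
  then have "1 \<le> s\<^sup>2 * j\<^sup>2" by (simp add: Suc_le_eq)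
  moreover have "(cmod x)\<^sup>2 = c * real (s\<^sup>2 * j\<^sup>2)"
    unfolding j(2) by simp
  ultimately show ?thesis by blast
qed

lemma codebook_admissible:
  fixes h N P :: real
  assumes h: "h \<noteq> 0" and N: "N > 0" and P: "high_snr N (2 * pi / \<bar>h\<bar>) P"
  shows "admissible (unif (codebook N (2 * pi / \<bar>h\<bar>) P)) P h"
proof -
  define c where "c = 2 * pi / \<bar>h\<bar>"
  define A where "A = codebook N c P"
  have c: "c > 0" using h by (simp add: c_def)
  note P = P[folded c_def]
  have A: "finite A" "A \<noteq> {}"
    unfolding A_def using c N P by (auto simp: codebook_finite codebook_nonempty)
  interpret U: prob_space "unif A" using A by (rule prob_space_unif)
  have "(\<integral>\<^sup>+ x. ennreal ((cmod x)\<^sup>2) \<partial>unif A) \<le> (\<integral>\<^sup>+ x. ennreal P \<partial>unif A)"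
    using AE_unif[OF A] codebook_power[OF c N P]
    by (intro nn_integral_mono_AE) (auto elim!: eventually_mono intro: ennreal_leI simp: A_def)
  then have power: "(\<integral>\<^sup>+ x. ennreal ((cmod x)\<^sup>2) \<partial>unif A) \<le> ennreal P"
    using U.emeasure_space_1 by simp
  have "AE x in unif A. \<exists>m::nat. m \<ge> 1 \<and> (cmod x)\<^sup>2 = 2 * pi * real m / \<bar>h\<bar>"
    using AE_unif[OF A] codebook_on_grid[OF c N P]
    by (auto elim!: eventually_mono simp: A_def c_def)
  then show ?thesis
    unfolding admissible_def using power U.prob_space_axioms unfolding A_def c_def by simp
qed

text \<open>The rate estimate of \<open>mutual_information_channel_lower_bound\<close> with \<open>\<delta> = 1 / P\<close> is at
  least \<open>rate_lb\<close>: \<open>\<bar>A\<bar> = J\<^sup>2 \<ge> P / (4 W)\<close> and \<open>\<bar>A\<bar> / P \<le> 1 / (4 c)\<close>.\<close>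

lemma rate_lb_le_codebook:
  fixes c N P :: real
  assumes c: "c > 0" and N: "N > 0" and P: "high_snr N c P"
  defines "M \<equiv> real (card (codebook N c P))"
  shows "rate_lb N c P \<le> log 2 M - M * (1 / P) / ln 2"
proof -
  define s where "s = real (radial_step N c P)"
  define W where "W = 128 * N * ln P + 32 * c"
  have M: "M = real (ring_count N c P) ^ 2"
    unfolding M_def using card_codebook[OF c N P] by (simp add: power2_eq_square)
  have P1: "1 \<le> P" using P unfolding high_snr_def by auto
  have W0: "0 < W" unfolding W_def using c N P1 by (simp add: add_nonneg_pos)
  note J = codebook_parameters[OF c N P, folded s_def M W_def]
  have "log 2 (P / (4 * W)) = (ln P - ln (4 * W)) / ln 2"
    using P1 W0 by (simp add: log_def ln_div)
  then have "rate_lb N c P = log 2 (P / (4 * W)) - 1 / (4 * c * ln 2)"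
    unfolding rate_lb_def W_def by (simp add: algebra_simps)
  moreover have "log 2 (P / (4 * W)) \<le> log 2 M"
    using J(3) P1 W0 by (intro log_mono) auto
  moreover have "M / P \<le> 1 / (4 * c)"
  proof -
    have "4 * c * 1 * M \<le> 4 * c * s\<^sup>2 * M"
      using radial_step_bounds(1)[OF c N P1] c unfolding s_def M
      by (intro mult_right_mono mult_left_mono) auto
    then show ?thesis using J(2) c P1 by (simp add: field_simps)
  qed
  then have "M * (1 / P) / ln 2 \<le> 1 / (4 * c * ln 2)"
    using divide_right_mono[of "M / P" "1 / (4 * c)" "ln 2"] by simp
  ultimately show ?thesis by linarith
qed

lemma codebook_rate1_bound:
  fixes c N P :: real
  assumes N: "N > 0" and h12: "h12 \<noteq> 0" and c: "c > 0" and P: "high_snr N c P"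
    and V: "admissible V P' h12"
  shows "rate_lb N c P \<le> rate1 h11 h12 N 2 (unif (codebook N c P)) V"
proof -
  have A: "finite (codebook N c P)" "codebook N c P \<noteq> {}"
    using c N P by (auto simp: codebook_finite codebook_nonempty)
  have "1 \<le> P" using P unfolding high_snr_def by auto
  then have "log 2 (card (codebook N c P)) - card (codebook N c P) * (1 / P) / ln 2
      \<le> rate1 h11 h12 N 2 (unif (codebook N c P)) V"
    using codebook_separation[OF c N P] by (intro rate1_lower_bound[OF N h12 A V]) auto
  then show ?thesis
    using rate_lb_le_codebook[OF c N P] by linarith
qed

lemma eventually_high_snr:
  assumes "c > 0" "N > 0"
  shows "eventually (high_snr N c) at_top"
proof -
  have "eventually (\<lambda>P. 16 * (128 * N * ln P + 32 * c) \<le> P) at_top"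
    using assms by real_asymp
  moreover have "eventually (\<lambda>P::real. 1 \<le> P) at_top" by real_asymp
  moreover have "eventually (\<lambda>P. N < P) at_top" by real_asymp
  ultimately show ?thesis
    unfolding high_snr_def by eventually_elim auto
qed

text \<open>The rate \<open>rate_lb\<close> has pre-log one: \<open>log\<^sub>2 (P / ln P)\<close> against \<open>log\<^sub>2 (P / N)\<close>.\<close>

lemma rate_lb_prelog:
  assumes "c > 0" "N > 0"
  shows "((\<lambda>P. rate_lb N c P / log 2 (P / N)) \<longlongrightarrow> 1) at_top"
  using assms unfolding rate_lb_def by real_asymp

lemma prelog_at_least_one:
  fixes Pw R :: "'a \<Rightarrow> real"
  assumes c: "c > 0" and N: "N > 0" and F: "F \<noteq> bot" and Pw: "filterlim Pw at_top F"
    and R: "\<forall>\<^sub>F x in F. rate_lb N c (Pw x) \<le> R x"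
  shows "1 \<le> Liminf F (\<lambda>x. ereal (R x / log 2 (Pw x / N)))"
proof -
  have lim: "((\<lambda>x. rate_lb N c (Pw x) / log 2 (Pw x / N)) \<longlongrightarrow> 1) F"
    using filterlim_compose[OF rate_lb_prelog[OF c N] Pw] .
  have "1 = Liminf F (\<lambda>x. ereal (rate_lb N c (Pw x) / log 2 (Pw x / N)))"
    using F lim_imp_Liminf tendsto_ereal[OF lim] by (metis one_ereal_def trivial_limit_def)
  also have "\<dots> \<le> Liminf F (\<lambda>x. ereal (R x / log 2 (Pw x / N)))"
  proof (intro Liminf_mono)
    have "\<forall>\<^sub>F x in F. N < Pw x"
      using Pw by (simp add: filterlim_at_top_dense)
    with R show "\<forall>\<^sub>F x in F. ereal (rate_lb N c (Pw x) / log 2 (Pw x / N))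
        \<le> ereal (R x / log 2 (Pw x / N))"
      by eventually_elim (use N in \<open>auto intro!: divide_right_mono\<close>)
  qed
  finally show ?thesis .
qed

text \<open>Performance of the pair of codebooks: \<open>c\<^sub>1 = 2\<pi>/\<bar>h\<^sub>2\<^sub>1\<bar>\<close> focuses the interference of user 1
  at receiver 2 and vice versa, so each user achieves \<open>rate_lb\<close> at its own power.\<close>

lemma codebook_pair:
  fixes h11 h12 h21 h22 N P1 P2 :: real
  assumes h12: "h12 \<noteq> 0" and h21: "h21 \<noteq> 0" and N: "N > 0"
    and P1: "high_snr N (2 * pi / \<bar>h21\<bar>) P1" and P2: "high_snr N (2 * pi / \<bar>h12\<bar>) P2"
  defines "\<mu>1 \<equiv> unif (codebook N (2 * pi / \<bar>h21\<bar>) P1)"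
    and "\<mu>2 \<equiv> unif (codebook N (2 * pi / \<bar>h12\<bar>) P2)"
  shows "admissible \<mu>1 P1 h21" "admissible \<mu>2 P2 h12"
    "rate_lb N (2 * pi / \<bar>h21\<bar>) P1 \<le> rate1 h11 h12 N 2 \<mu>1 \<mu>2"
    "rate_lb N (2 * pi / \<bar>h12\<bar>) P2 \<le> rate2 h21 h22 N 2 \<mu>1 \<mu>2"
proof -
  have c1: "2 * pi / \<bar>h21\<bar> > 0" and c2: "2 * pi / \<bar>h12\<bar> > 0" using h12 h21 by simp_all
  show adm1: "admissible \<mu>1 P1 h21" and adm2: "admissible \<mu>2 P2 h12"
    unfolding \<mu>1_def \<mu>2_def using h12 h21 N P1 P2 by (simp_all add: codebook_admissible)
  show "rate_lb N (2 * pi / \<bar>h21\<bar>) P1 \<le> rate1 h11 h12 N 2 \<mu>1 \<mu>2"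
    unfolding \<mu>1_def using codebook_rate1_bound[OF N h12 c1 P1 adm2] .
  have "rate2 h21 h22 N 2 \<mu>1 \<mu>2 = rate1 h22 h21 N 2 \<mu>2 \<mu>1"
    using adm1 adm2 N unfolding admissible_def by (intro rate2_eq_rate1_swapped) auto
  then show "rate_lb N (2 * pi / \<bar>h12\<bar>) P2 \<le> rate2 h21 h22 N 2 \<mu>1 \<mu>2"
    unfolding \<mu>2_def using codebook_rate1_bound[OF N h21 c2 P2 adm1] by simp
qed

theorem mainTheorem5:
  fixes h11 h12 h21 h22 N :: real
  assumes "h12 \<noteq> 0" and "h21 \<noteq> 0" and "N > 0"
  shows "\<exists>\<mu>1 \<mu>2 :: real \<Rightarrow> real \<Rightarrow> complex measure.
    (\<forall>\<^sub>F (P1, P2) in at_top \<times>\<^sub>F at_top.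
        admissible (\<mu>1 P1 P2) P1 h21 \<and> admissible (\<mu>2 P1 P2) P2 h12) \<and>
    Liminf (at_top \<times>\<^sub>F at_top)
      (\<lambda>(P1, P2). ereal (rate1 h11 h12 N 2 (\<mu>1 P1 P2) (\<mu>2 P1 P2) / log 2 (P1 / N))) \<ge> 1 \<and>
    Liminf (at_top \<times>\<^sub>F at_top)
      (\<lambda>(P1, P2). ereal (rate2 h21 h22 N 2 (\<mu>1 P1 P2) (\<mu>2 P1 P2) / log 2 (P2 / N))) \<ge> 1"
proof -
  define c1 where "c1 = 2 * pi / \<bar>h21\<bar>"
  define c2 where "c2 = 2 * pi / \<bar>h12\<bar>"
  have c: "c1 > 0" "c2 > 0" and N: "N > 0" using assms by (simp_all add: c1_def c2_def)
  define \<mu>1 where "\<mu>1 = (\<lambda>(P1::real) (P2::real). unif (codebook N c1 P1))"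
  define \<mu>2 where "\<mu>2 = (\<lambda>(P1::real) (P2::real). unif (codebook N c2 P2))"
  note pair = codebook_pair[OF assms, folded c1_def c2_def]
  have snr: "\<forall>\<^sub>F p in at_top \<times>\<^sub>F at_top. high_snr N c1 (fst p) \<and> high_snr N c2 (snd p)"
    using eventually_high_snr[OF c(1) N] eventually_high_snr[OF c(2) N]
    by (auto simp: eventually_prod_filter)
  have bot: "at_top \<times>\<^sub>F at_top \<noteq> (bot :: (real \<times> real) filter)"
    by (simp add: prod_filter_eq_bot)
  have "1 \<le> Liminf (at_top \<times>\<^sub>F at_top)
      (\<lambda>p. ereal (rate1 h11 h12 N 2 (\<mu>1 (fst p) (snd p)) (\<mu>2 (fst p) (snd p)) / log 2 (fst p / N)))"
    using snr by (intro prelog_at_least_one[OF c(1) N bot filterlim_fst])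
      (auto elim!: eventually_mono simp: \<mu>1_def \<mu>2_def intro: pair(3))
  moreover have "1 \<le> Liminf (at_top \<times>\<^sub>F at_top)
      (\<lambda>p. ereal (rate2 h21 h22 N 2 (\<mu>1 (fst p) (snd p)) (\<mu>2 (fst p) (snd p)) / log 2 (snd p / N)))"
    using snr by (intro prelog_at_least_one[OF c(2) N bot filterlim_snd])
      (auto elim!: eventually_mono simp: \<mu>1_def \<mu>2_def intro: pair(4))
  moreover have "\<forall>\<^sub>F p in at_top \<times>\<^sub>F at_top.
      admissible (\<mu>1 (fst p) (snd p)) (fst p) h21 \<and> admissible (\<mu>2 (fst p) (snd p)) (snd p) h12"
    using snr by (auto elim!: eventually_mono simp: \<mu>1_def \<mu>2_def intro: pair(1,2))
  ultimately show ?thesis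
    unfolding case_prod_beta' by blast
qed

end
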